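(* Let $w_1,\dots,w_n\in\{1,\dots,N\}$ be distinct and let $V_\bullet$ be the permutation flag $V_j=\mathrm{span}(e_{w_1},\dots,e_{w_j})$, and suppose $V_\bullet\in Y$. Then there is a unique $b\in\{1,\dots,n\}$ with $w_b\ge n$, and $\{w_l: l\neq b\}=\{1,\dots,n-1\}$. Moreover, for every admissible $i$: (1) if $w_b\le 2n-2$, let $a$ be the index with $w_a=w_b-(n-1)$ (necessarily $a<b$); then $V_\bullet\in K^i$ if and only if $a<i\le b$; (2) if $w_b\ge 2n-1$, then $V_\bullet\in K^i$ if and only if $i\le b$.
   Context: Fix integers $n\ge 2$ and $s\ge n-1$, let $N=n+s-1$, and let $e_1,\dots,e_N$ be the standard basis of $\mathbb{C}^N$. Let $x:\mathbb{C}^N\to\mathbb{C}^N$ be the linear map with $xe_m=e_{m-(n-1)}$ for $n\le m\le 2n-2$ and $xe_m=0$ otherwise; thus $\mathrm{im}(x)=\mathrm{span}(e_1,\dots,e_{n-1})$. $\mathrm{Fl}(1^n,s-1)$ is the variety of partial flags $V_\bullet=(0=V_0\subset V_1\subset\cdots\subset V_n\subset\mathbb{C}^N)$ with $\dim V_j=j$. The $\Delta$-Springer fiber is $Y=\{V_\bullet\in\mathrm{Fl}(1^n,s-1)\mid \mathrm{im}(x)\subseteq V_n,\ xV_j\subseteq V_j \text{ for all } j\}$. For distinct $w_1,\dots,w_n\in\{1,\dots,N\}$, the Schubert cell $X_w^\circ$ is the set of flags with $\dim(V_j\cap\mathrm{span}(e_1,\dots,e_m))=\#\{l\le j: w_l\le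 m\}$ for all $j,m$. An index $i$ is admissible if $1\le i\le n$ when $s>n-1$, and $2\le i\le n$ when $s=n-1$. For admissible $i$ put $w^{(i)}=(n-1,n-2,\dots,n-i+1,\,N,\,n-i,\dots,1)$ and let $K^i$ be the closure in $Y$ of $X^\circ_{w^{(i)}}\cap Y$ (the irreducible components of $Y$). *)

theory Defs
  imports "HOL-Analysis.Analysis" "HOL-Library.Function_Algebras"
begin

text \<open>Vectors of C^N are modelled as functions nat => complex vanishing outside {1..N}.\<close>

type_synonym cvec = "nat \<Rightarrow> complex"

definition cscale :: "complex \<Rightarrow> cvec \<Rightarrow> cvec" where
  "cscale c v = (\<lambda>k. c * v k)"

abbreviation cspan :: "cvec set \<Rightarrow> cvec set" where
  "cspan \<equiv> module.span cscale"

abbreviation csubspace :: "cvec set \<Rightarrow> bool" where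
  "csubspace \<equiv> module.subspace cscale"

abbreviation cdependent :: "cvec set \<Rightarrow> bool" where
  "cdependent \<equiv> module.dependent cscale"

abbreviation cdim :: "cvec set \<Rightarrow> nat" where
  "cdim \<equiv> vector_space.dim cscale"

definition CN :: "nat \<Rightarrow> cvec set" where
  "CN N = {v. \<forall>k. k \<notin> {1..N} \<longrightarrow> v k = 0}"

definition ebas :: "nat \<Rightarrow> cvec" where
  "ebas m = (\<lambda>k. if k = m then 1 else 0)"

text \<open>The nilpotent map x: x e_m = e_{m-(n-1)} for n <= m <= 2n-2, x e_m = 0 otherwise.\<close>
definition xmap :: "nat \<Rightarrow> cvec \<Rightarrow> cvec" where
  "xmap n v = (\<lambda>k. if 1 \<le> k \<and> k \<le> n - 1 then v (k + (n - 1)) else 0)"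

text \<open>Partial flags V_0 \<subset> V_1 \<subset> ... \<subset> V_n in C^N with dim V_j = j.  A flag is a function
  j \<mapsto> V_j, normalised by V_j = V_n for j > n.\<close>
definition Fl :: "nat \<Rightarrow> nat \<Rightarrow> (nat \<Rightarrow> cvec set) set" where
  "Fl n N = {V. (\<forall>j. V j = V (min j n))
     \<and> (\<forall>j\<le>n. csubspace (V j) \<and> V j \<subseteq> CN N \<and> cdim (V j) = j)
     \<and> (\<forall>j\<in>{1..n}. V (j - 1) \<subseteq> V j)}"

text \<open>Frames (ordered n-tuples f_1..f_n of linearly independent vectors of C^N) and the flag
  they span; the topology of Fl is the quotient topology of the (Euclidean) frame space.\<close>
definition frames :: "nat \<Rightarrow> nat \<Rightarrow> (nat \<Rightarrow> cvec) set" where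
  "frames n N = {f. (\<forall>l. l \<notin> {1..n} \<longrightarrow> f l = 0) \<and> (\<forall>l\<in>{1..n}. f l \<in> CN N)
      \<and> inj_on f {1..n} \<and> \<not> cdependent (f ` {1..n})}"

definition flag_of :: "nat \<Rightarrow> (nat \<Rightarrow> cvec) \<Rightarrow> (nat \<Rightarrow> cvec set)" where
  "flag_of n f = (\<lambda>j. cspan (f ` {1..min j n}))"

definition flag_top :: "nat \<Rightarrow> nat \<Rightarrow> (nat \<Rightarrow> cvec set) topology" where
  "flag_top n N = topology (\<lambda>U. U \<subseteq> Fl n N \<and>
      openin (top_of_set (frames n N)) {f \<in> frames n N. flag_of n f \<in> U})"

definition DeltaY :: "nat \<Rightarrow> nat \<Rightarrow> (nat \<Rightarrow> cvec set) set" where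
  "DeltaY n s = {V \<in> Fl n (n + s - 1).
      xmap n ` CN (n + s - 1) \<subseteq> V n \<and> (\<forall>j\<le>n. xmap n ` V j \<subseteq> V j)}"

definition Ecoord :: "nat \<Rightarrow> cvec set" where
  "Ecoord m = cspan (ebas ` {1..m})"

definition schubert_cell :: "nat \<Rightarrow> nat \<Rightarrow> (nat \<Rightarrow> nat) \<Rightarrow> (nat \<Rightarrow> cvec set) set" where
  "schubert_cell n N w = {V \<in> Fl n N. \<forall>j\<le>n. \<forall>m\<le>N.
      cdim (V j \<inter> Ecoord m) = card {l \<in> {1..j}. w l \<le> m}}"

definition admissible :: "nat \<Rightarrow> nat \<Rightarrow> nat \<Rightarrow> bool" where
  "admissible n s i = (if s > n - 1 then 1 \<le> i \<and> i \<le> n else 2 \<le> i \<and> i \<le> n)"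

text \<open>w^{(i)} = (n-1, n-2, ..., n-i+1, N, n-i, ..., 1), indexed by 1..n.\<close>
definition wi :: "nat \<Rightarrow> nat \<Rightarrow> nat \<Rightarrow> nat \<Rightarrow> nat" where
  "wi n s i l = (if l < i then n - l else if l = i then n + s - 1 else n + 1 - l)"

definition Kcomp :: "nat \<Rightarrow> nat \<Rightarrow> nat \<Rightarrow> (nat \<Rightarrow> cvec set) set" where
  "Kcomp n s i = (subtopology (flag_top n (n + s - 1)) (DeltaY n s)) closure_of
      (schubert_cell n (n + s - 1) (wi n s i) \<inter> DeltaY n s)"

definition perm_flag :: "nat \<Rightarrow> (nat \<Rightarrow> nat) \<Rightarrow> (nat \<Rightarrow> cvec set)" where
  "perm_flag n w = (\<lambda>j. cspan ((ebas \<circ> w) ` {1..min j n}))"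

end

theory Submission
  imports Defs
begin

text \<open>
  The combinatorial claims follow from \<open>im x = E\<^sub>n\<^sub>-\<^sub>1 \<subseteq> V\<^sub>n\<close> and the \<open>x\<close>-stability of \<open>V\<^sub>b\<close>,
  where \<open>E\<^sub>m = span(e\<^sub>1,\<dots>,e\<^sub>m)\<close>.

  Every flag of \<open>X\<^sub>w\<^sub>(\<^sub>i\<^sub>)\<^sup>\<circ> \<inter> Y\<close> satisfies \<open>V\<^sub>i\<^sub>-\<^sub>1 \<subseteq> E\<^sub>n\<^sub>-\<^sub>1\<close> and \<open>x V\<^sub>n \<subseteq> V\<^sub>i\<^sub>-\<^sub>1\<close>. The first
  condition is closed and fails for the permutation flag when \<open>i > b\<close>, since \<open>e\<^sub>w\<^sub>b \<in> V\<^sub>i\<^sub>-\<^sub>1\<close>.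
  For \<open>i \<le> a\<close> the second one fails near the permutation flag: a frame \<open>g\<close> close to
  \<open>(e\<^sub>w\<^sub>1,\<dots>,e\<^sub>w\<^sub>n)\<close> has \<open>x g\<^sub>b\<close> close to \<open>e\<^sub>w\<^sub>a\<close>, which is far from the span of \<open>g\<^sub>1,\<dots>,g\<^sub>i\<^sub>-\<^sub>1\<close>
  because those vectors are close to other coordinate vectors.

  Conversely, for \<open>a < i \<le> b\<close> (resp. \<open>i \<le> b\<close>) the permutation frame is the value at \<open>t = 0\<close> of
  an explicit continuous curve of frames whose flags lie in \<open>X\<^sub>w\<^sub>(\<^sub>i\<^sub>)\<^sup>\<circ> \<inter> Y\<close> for \<open>0 < t < 1\<close>:
  apart from positions \<open>i\<close> and \<open>b\<close> it consists of vectors \<open>e\<^sub>u\<^sub>r + t e\<^sub>n\<^sub>-\<^sub>r\<close>, which span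
  \<open>E\<^sub>n\<^sub>-\<^sub>1\<close> in general position with respect to the coordinate flag, while the vector at
  position \<open>b\<close> acquires a nonzero \<open>e\<^sub>N\<close>-component which, mixed into position \<open>i\<close>, places the
  jump at \<open>N\<close> in position \<open>i\<close>.
\<close>

section \<open>Coordinate subspaces of \<open>\<complex>\<^sup>N\<close>\<close>

lemma cscale_apply: "cscale c v k = c * v k"
  by (simp add: cscale_def)

global_interpretation cv: vector_space cscale
  by unfold_locales (auto simp: cscale_def algebra_simps fun_eq_iff)

lemma cscale_zero [simp]: "cscale 0 v = 0"
  by (simp add: fun_eq_iff cscale_apply)

lemma sum_cvec_apply: "(\<Sum>q\<in>I. (F q :: cvec)) k = (\<Sum>q\<in>I. F q k)"
  by (induction I rule: infinite_finite_induct) auto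

lemma sum_cscale_in_cspan_image: "(\<Sum>q\<in>I. cscale (\<alpha> q) (f q)) \<in> cspan (f ` I)"
  by (intro cv.span_sum cv.span_scale cv.span_base) auto

lemma in_cspan_image_imp_sum:
  assumes "finite I" "v \<in> cspan (f ` I)"
  shows "\<exists>\<alpha>. v = (\<Sum>q\<in>I. cscale (\<alpha> q) (f q))"
proof -
  let ?S = "{v. \<exists>\<alpha>. v = (\<Sum>q\<in>I. cscale (\<alpha> q) (f q))}"
  have "csubspace ?S"
    unfolding cv.subspace_def
  proof (intro conjI allI ballI impI)
    show "0 \<in> ?S"
      by (intro CollectI exI[of _ "\<lambda>_. 0"]) (simp add: fun_eq_iff sum_cvec_apply)
  next
    fix x y assume "x \<in> ?S" "y \<in> ?S"
    then obtain a b where "x = (\<Sum>q\<in>I. cscale (a q) (f q))" "y = (\<Sum>q\<in>I. cscale (b q) (f q))"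
      by auto
    then show "x + y \<in> ?S"
      by (intro CollectI exI[of _ "\<lambda>q. a q + b q"])
        (simp add: cscale_apply fun_eq_iff sum_cvec_apply sum.distrib algebra_simps)
  next
    fix c x assume "x \<in> ?S"
    then obtain a where "x = (\<Sum>q\<in>I. cscale (a q) (f q))" by auto
    then show "cscale c x \<in> ?S"
      by (intro CollectI exI[of _ "\<lambda>q. c * a q"])
        (simp add: cscale_apply fun_eq_iff sum_cvec_apply sum_distrib_left algebra_simps)
  qed
  moreover have "f ` I \<subseteq> ?S"
  proof
    fix x assume "x \<in> f ` I"
    then obtain p where p: "p \<in> I" "x = f p" by auto
    show "x \<in> ?S"
    proof (intro CollectI exI[of _ "\<lambda>q. if q = p then 1 else 0"] ext)
      fix k
      have "(\<Sum>q\<in>I. cscale (if q = p then 1 else 0) (f q) k) = (\<Sum>q\<in>I. if q = p then f p k else 0)"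
        by (rule sum.cong) auto
      then show "x k = (\<Sum>q\<in>I. cscale (if q = p then 1 else 0) (f q)) k"
        using p assms(1) by (simp add: cscale_apply sum_cvec_apply)
    qed
  qed
  ultimately have "cspan (f ` I) \<subseteq> ?S" by (rule cv.span_minimal[rotated])
  with assms(2) show ?thesis by auto
qed

lemma independent_image_if_scalars_zero:
  assumes fin: "finite I"
    and zero: "\<And>\<alpha>. (\<Sum>q\<in>I. cscale (\<alpha> q) (f q)) = 0 \<Longrightarrow> \<forall>q\<in>I. \<alpha> q = 0"
  shows "inj_on f I \<and> \<not> cdependent (f ` I)"
proof
  show inj: "inj_on f I"
  proof (rule inj_onI, rule ccontr)
    fix p q assume pq: "p \<in> I" "q \<in> I" "f p = f q" "p \<noteq> q"
    let ?a = "\<lambda>r. if r = p then (1::complex) else if r = q then -1 else 0"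
    have "(\<Sum>r\<in>I. cscale (?a r) (f r)) = 0"
    proof (rule ext)
      fix k
      have "(\<Sum>r\<in>I. ?a r * f r k)
          = (\<Sum>r\<in>I. (if r = p then f p k else 0) + (if r = q then - f q k else 0))"
        by (rule sum.cong) (use pq in auto)
      also have "\<dots> = 0" using pq fin by (simp add: sum.distrib)
      finally show "(\<Sum>r\<in>I. cscale (?a r) (f r)) k = 0 k"
        by (simp add: cscale_apply sum_cvec_apply)
    qed
    from zero[OF this] pq show False by auto
  qed
  show "\<not> cdependent (f ` I)"
  proof (rule cv.independent_if_scalars_zero)
    show "finite (f ` I)" using fin by simp
  next
    fix g x assume s: "(\<Sum>x\<in>f ` I. cscale (g x) x) = 0" and x: "x \<in> f ` I"
    have "(\<Sum>q\<in>I. cscale (g (f q)) (f q)) = 0"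
      using s by (simp add: sum.reindex[OF inj] o_def)
    from zero[OF this] x show "g x = 0" by auto
  qed
qed

lemma ebas_independent: "finite I \<Longrightarrow> inj_on ebas I \<and> \<not> cdependent (ebas ` I)"
proof (rule independent_image_if_scalars_zero)
  fix \<alpha> assume fin: "finite I" and zero: "(\<Sum>q\<in>I. cscale (\<alpha> q) (ebas q)) = 0"
  show "\<forall>q\<in>I. \<alpha> q = 0"
  proof
    fix q assume q: "q \<in> I"
    have "0 = (\<Sum>r\<in>I. cscale (\<alpha> r) (ebas r)) q" using zero by simp
    also have "\<dots> = (\<Sum>r\<in>I. if r = q then \<alpha> q else 0)"
      unfolding sum_cvec_apply by (rule sum.cong) (auto simp: ebas_def cscale_apply)
    also have "\<dots> = \<alpha> q" using q fin by (simp add: sum.delta')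
    finally show "\<alpha> q = 0" by simp
  qed
qed

lemma cspan_ebas_coord_zero:
  assumes "v \<in> cspan (ebas ` M)" "k \<notin> M"
  shows "v k = 0"
  using assms
  by (induction rule: cv.span_induct_alt) (auto simp: ebas_def cscale_apply split: if_splits)

lemma Ecoord_iff: "v \<in> Ecoord m \<longleftrightarrow> (\<forall>k. k \<notin> {1..m} \<longrightarrow> v k = 0)"
proof
  assume "v \<in> Ecoord m"
  then show "\<forall>k. k \<notin> {1..m} \<longrightarrow> v k = 0"
    unfolding Ecoord_def using cspan_ebas_coord_zero by blast
next
  assume vanish: "\<forall>k. k \<notin> {1..m} \<longrightarrow> v k = 0"
  have "v = (\<Sum>q\<in>{1..m}. cscale (v q) (ebas q))"
  proof
    fix x
    have "(\<Sum>q\<in>{1..m}. v q * ebas q x) = (\<Sum>q\<in>{1..m}. if x = q then v x else 0)"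
      by (rule sum.cong) (auto simp: ebas_def)
    also have "\<dots> = v x" using vanish by (simp add: sum.delta)
    finally show "v x = (\<Sum>q\<in>{1..m}. cscale (v q) (ebas q)) x"
      by (simp add: sum_cvec_apply cscale_apply)
  qed
  also have "\<dots> \<in> Ecoord m"
    unfolding Ecoord_def by (rule sum_cscale_in_cspan_image)
  finally show "v \<in> Ecoord m" .
qed

lemma Ecoord_zero: "v \<in> Ecoord m \<Longrightarrow> q \<notin> {1..m} \<Longrightarrow> v q = 0"
  by (simp add: Ecoord_iff)

lemma CN_eq_Ecoord: "CN N = Ecoord N"
  by (auto simp: CN_def Ecoord_iff)

lemma csubspace_Ecoord: "csubspace (Ecoord m)"
  by (simp add: Ecoord_def cv.subspace_span)

lemma csubspace_CN: "csubspace (CN N)"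
  by (simp add: CN_eq_Ecoord csubspace_Ecoord)

lemma cspan_subset_CN: "S \<subseteq> CN N \<Longrightarrow> cspan S \<subseteq> CN N"
  using cv.span_minimal csubspace_CN by blast

lemma Ecoord_mono: "m \<le> m' \<Longrightarrow> Ecoord m \<subseteq> Ecoord m'"
  by (auto simp: Ecoord_iff)

lemma Ecoord_0: "Ecoord 0 = {0}"
  by (auto simp: Ecoord_iff fun_eq_iff)

lemma cdim_zero: "cdim {0} = 0"
  using cv.dim_eq_card[of "{}" "{0}"] cv.independent_empty cv.span_insert_0[of "{}"] by simp

lemma cdim_Ecoord: "cdim (Ecoord m) = m"
proof -
  have "cdim (Ecoord m) = card (ebas ` {1..m})"
    unfolding Ecoord_def using ebas_independent[of "{1..m}"] cv.dim_span_eq_card_independent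
    by auto
  also have "\<dots> = m" using ebas_independent[of "{1..m}"] by (simp add: card_image)
  finally show ?thesis .
qed

lemma CN_last_zero_imp_Ecoord:
  assumes "v \<in> CN N" "v N = 0"
  shows "v \<in> Ecoord (N - 1)"
  unfolding Ecoord_iff
proof (intro allI impI)
  fix k assume "k \<notin> {1..N - 1}"
  then have "k = N \<or> k \<notin> {1..N}" by auto
  then show "v k = 0" using assms by (auto simp: CN_def)
qed

lemma finite_basis_in_CN:
  assumes "A \<subseteq> CN N"
  obtains B where "B \<subseteq> A" "\<not> cdependent B" "A \<subseteq> cspan B" "card B = cdim A" "finite B"
proof -
  obtain B where B: "B \<subseteq> A" "\<not> cdependent B" "A \<subseteq> cspan B" "card B = cdim A"
    by (rule cv.basis_exists)
  have "finite B"
    using cv.independent_span_bound[of "ebas ` {1..N}" B] B assms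
    by (auto simp: CN_eq_Ecoord Ecoord_def)
  with B that show ?thesis by auto
qed

lemma cdim_span_insert:
  assumes "csubspace A" "A \<subseteq> CN N" "v \<notin> A"
  shows "cdim (cspan (insert v A)) = cdim A + 1"
proof -
  obtain B where B: "B \<subseteq> A" "\<not> cdependent B" "A \<subseteq> cspan B" "card B = cdim A" "finite B"
    using finite_basis_in_CN assms(2) by blast
  have span_B: "cspan B = A" using B assms(1) by (simp add: cv.span_subspace)
  have indep: "\<not> cdependent (insert v B)"
    using cv.independent_insertI[of v B] B assms(3) span_B by auto
  have "cspan (insert v B) = cspan (insert v A)"
    using span_B cv.span_eq_iff[of A] assms(1) unfolding cv.span_insert by metis
  then have "cdim (cspan (insert v A)) = card (insert v B)"
    using cv.dim_span_eq_card_independent[OF indep] by simp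
  also have "\<dots> = cdim A + 1" using B assms(3) by (subst card_insert_disjoint) auto
  finally show ?thesis .
qed

lemma csubspace_eq_if_cdim_le:
  assumes "csubspace A" "csubspace B" "A \<subseteq> B" "B \<subseteq> CN N" "cdim B \<le> cdim A"
  shows "A = B"
proof (rule ccontr)
  assume "A \<noteq> B"
  with assms(3) obtain v where v: "v \<in> B" "v \<notin> A" by auto
  obtain BA where BA: "BA \<subseteq> A" "\<not> cdependent BA" "A \<subseteq> cspan BA" "card BA = cdim A" "finite BA"
    using finite_basis_in_CN[of A N] assms by auto
  obtain BB where BB: "BB \<subseteq> B" "\<not> cdependent BB" "B \<subseteq> cspan BB" "card BB = cdim B" "finite BB"
    using finite_basis_in_CN[of B N] assms by auto
  have "cspan BA = A" using BA assms(1) by (simp add: cv.span_subspace)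
  then have indep: "\<not> cdependent (insert v BA)"
    using cv.independent_insertI[of v BA] BA v by auto
  have "insert v BA \<subseteq> cspan BB" using BA BB v assms(3) by auto
  then have "card (insert v BA) \<le> card BB"
    using cv.independent_span_bound[OF BB(5) indep] by auto
  moreover have "card (insert v BA) = card BA + 1" using BA v by (subst card_insert_disjoint) auto
  ultimately show False using BA BB assms(5) by auto
qed

lemma spanning_set_independent:
  assumes "finite W" "card W \<le> k" "\<not> cdependent S" "S \<subseteq> cspan W" "card S = k" "finite S"
  shows "\<not> cdependent W \<and> card W = k"
proof -
  have card_W: "card W = k"
    using cv.independent_span_bound[OF assms(1) assms(3) assms(4)] assms by auto
  moreover have "\<not> cdependent W"
  proof
    assume "cdependent W"
    then obtain a where a: "a \<in> W" "a \<in> cspan (W - {a})" by (auto simp: cv.dependent_def)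
    have "cspan W = cspan (W - {a})"
      using cv.span_redundant[OF a(2)] a(1) by (metis insert_Diff)
    then have "card S \<le> card (W - {a})"
      using cv.independent_span_bound[of "W - {a}" S] assms by auto
    moreover have "card (W - {a}) < card W" using a assms(1) by (meson card_Diff1_less)
    ultimately show False using card_W assms by auto
  qed
  ultimately show ?thesis by auto
qed

definition is_jump :: "cvec set \<Rightarrow> nat \<Rightarrow> bool" where
  "is_jump W m \<longleftrightarrow> (\<exists>v\<in>W. v \<in> Ecoord m \<and> v m \<noteq> 0)"

lemma inter_Ecoord_Suc_eq_span_insert:
  assumes W: "csubspace W" and v: "v \<in> W" "v \<in> Ecoord (Suc m)" "v (Suc m) \<noteq> 0"
  shows "W \<inter> Ecoord (Suc m) = cspan (insert v (W \<inter> Ecoord m))"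
proof
  show "cspan (insert v (W \<inter> Ecoord m)) \<subseteq> W \<inter> Ecoord (Suc m)"
    using W v Ecoord_mono[of m "Suc m"]
    by (intro cv.span_minimal cv.subspace_inter csubspace_Ecoord) auto
next
  show "W \<inter> Ecoord (Suc m) \<subseteq> cspan (insert v (W \<inter> Ecoord m))"
  proof
    fix u assume u: "u \<in> W \<inter> Ecoord (Suc m)"
    let ?c = "u (Suc m) / v (Suc m)"
    have "u - cscale ?c v \<in> W" using u v W cv.subspace_diff cv.subspace_scale by blast
    moreover have "u - cscale ?c v \<in> Ecoord m"
      unfolding Ecoord_iff
    proof (intro allI impI)
      fix k assume "k \<notin> {1..m}"
      then have "k = Suc m \<or> k \<notin> {1..Suc m}" by auto
      then show "(u - cscale ?c v) k = 0" using u v by (auto simp: Ecoord_iff cscale_apply)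
    qed
    ultimately have "u - cscale ?c v \<in> cspan (W \<inter> Ecoord m)" by (simp add: cv.span_base)
    then show "u \<in> cspan (insert v (W \<inter> Ecoord m))" using cv.span_breakdown_eq by blast
  qed
qed

lemma cdim_inter_Ecoord_eq_card_jumps:
  assumes W: "csubspace W" "W \<subseteq> CN N"
  shows "cdim (W \<inter> Ecoord m) = card {m' \<in> {1..m}. is_jump W m'}"
proof (induction m)
  case 0
  have "W \<inter> Ecoord 0 = {0}" using W cv.subspace_0 by (auto simp: Ecoord_0)
  then show ?case by (simp add: cdim_zero)
next
  case (Suc m)
  show ?case
  proof (cases "is_jump W (Suc m)")
    case True
    then obtain v where v: "v \<in> W" "v \<in> Ecoord (Suc m)" "v (Suc m) \<noteq> 0"
      by (auto simp: is_jump_def)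
    have "v \<notin> W \<inter> Ecoord m" using v(3) by (auto simp: Ecoord_iff intro!: exI[of _ "Suc m"])
    then have "cdim (W \<inter> Ecoord (Suc m)) = cdim (W \<inter> Ecoord m) + 1"
      using inter_Ecoord_Suc_eq_span_insert[OF W(1) v] cdim_span_insert[of "W \<inter> Ecoord m" N v] W
      by (auto intro: cv.subspace_inter csubspace_Ecoord)
    moreover have "{m' \<in> {1..Suc m}. is_jump W m'} = insert (Suc m) {m' \<in> {1..m}. is_jump W m'}"
      using True by (auto simp: le_Suc_eq)
    ultimately show ?thesis using Suc by simp
  next
    case False
    have "W \<inter> Ecoord (Suc m) \<subseteq> Ecoord m"
    proof
      fix u assume u: "u \<in> W \<inter> Ecoord (Suc m)"
      then have "u (Suc m) = 0" using False by (auto simp: is_jump_def)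
      with u show "u \<in> Ecoord m" by (auto simp: Ecoord_iff le_Suc_eq)
    qed
    then have "W \<inter> Ecoord (Suc m) = W \<inter> Ecoord m"
      using Ecoord_mono[of m "Suc m"] by auto
    moreover have "{m' \<in> {1..Suc m}. is_jump W m'} = {m' \<in> {1..m}. is_jump W m'}"
      using False by (auto simp: le_Suc_eq)
    ultimately show ?thesis using Suc by simp
  qed
qed

section \<open>Flags, frames and the quotient topology\<close>

lemma Fl_D:
  assumes "V \<in> Fl n N" "j \<le> n"
  shows "csubspace (V j)" "V j \<subseteq> CN N" "cdim (V j) = j"
  using assms unfolding Fl_def by auto

lemma Fl_mono:
  assumes V: "V \<in> Fl n N" and "j \<le> j'"
  shows "V j \<subseteq> V j'"
proof -
  have chain: "\<forall>j\<in>{1..n}. V (j - 1) \<subseteq> V j" and trunc: "\<And>j. V j = V (min j n)"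
    using V unfolding Fl_def by blast+
  have step: "V k \<subseteq> V (Suc k)" for k
  proof (cases "Suc k \<le> n")
    case True
    then show ?thesis using chain[rule_format, of "Suc k"] by simp
  next
    case False
    then have "min k n = n" "min (Suc k) n = n" by auto
    then show ?thesis using trunc[of k] trunc[of "Suc k"] by simp
  qed
  show ?thesis using \<open>j \<le> j'\<close>
    by (induction j' rule: dec_induct) (use step in blast)+
qed

lemma flag_of_in_Fl:
  assumes f: "f \<in> frames n N"
  shows "flag_of n f \<in> Fl n N"
proof -
  have f1: "inj_on f {1..n}" "\<not> cdependent (f ` {1..n})" "\<And>l. l \<in> {1..n} \<Longrightarrow> f l \<in> CN N"
    using f by (auto simp: frames_def)
  have dim: "cdim (cspan (f ` {1..j})) = j" if "j \<le> n" for j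
  proof -
    have "\<not> cdependent (f ` {1..j})"
      by (rule cv.independent_mono[OF f1(2)]) (use that in auto)
    then have "cdim (cspan (f ` {1..j})) = card (f ` {1..j})"
      by (rule cv.dim_span_eq_card_independent)
    also have "\<dots> = j" using inj_on_subset[OF f1(1), of "{1..j}"] that by (simp add: card_image)
    finally show ?thesis .
  qed
  show ?thesis unfolding Fl_def flag_of_def
  proof (intro CollectI conjI allI impI ballI)
    fix j assume "j \<le> n"
    then show "csubspace (cspan (f ` {1..min j n}))" "cdim (cspan (f ` {1..min j n})) = j"
      using dim by (auto simp: cv.subspace_span)
    show "cspan (f ` {1..min j n}) \<subseteq> CN N"
      using f1(3) \<open>j \<le> n\<close> by (intro cspan_subset_CN) auto
  next
    fix j assume "j \<in> {1..n}"
    then show "cspan (f ` {1..min (j - 1) n}) \<subseteq> cspan (f ` {1..min j n})"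
      by (intro cv.span_mono) auto
  qed simp
qed

lemma flag_of_le: "j \<le> n \<Longrightarrow> flag_of n f j = cspan (f ` {1..j})"
  by (simp add: flag_of_def)

lemma istopology_flag_top: "istopology (\<lambda>U. U \<subseteq> Fl n N \<and>
      openin (top_of_set (frames n N)) {f \<in> frames n N. flag_of n f \<in> U})"
  unfolding istopology_def
proof (rule conjI; intro allI impI)
  fix S T
  assume "S \<subseteq> Fl n N \<and> openin (top_of_set (frames n N)) {f \<in> frames n N. flag_of n f \<in> S}"
    and "T \<subseteq> Fl n N \<and> openin (top_of_set (frames n N)) {f \<in> frames n N. flag_of n f \<in> T}"
  moreover have "{f \<in> frames n N. flag_of n f \<in> S \<inter> T}
      = {f \<in> frames n N. flag_of n f \<in> S} \<inter> {f \<in> frames n N. flag_of n f \<in> T}"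
    by auto
  ultimately show "S \<inter> T \<subseteq> Fl n N
      \<and> openin (top_of_set (frames n N)) {f \<in> frames n N. flag_of n f \<in> S \<inter> T}"
    by auto
next
  fix K
  assume "\<forall>S\<in>K. S \<subseteq> Fl n N
      \<and> openin (top_of_set (frames n N)) {f \<in> frames n N. flag_of n f \<in> S}"
  moreover have "{f \<in> frames n N. flag_of n f \<in> \<Union>K} = (\<Union>S\<in>K. {f \<in> frames n N. flag_of n f \<in> S})"
    by auto
  ultimately show "\<Union>K \<subseteq> Fl n N
      \<and> openin (top_of_set (frames n N)) {f \<in> frames n N. flag_of n f \<in> \<Union>K}"
    by auto
qed

lemma openin_flag_top: "openin (flag_top n N) U \<longleftrightarrow> U \<subseteq> Fl n N \<and>
      openin (top_of_set (frames n N)) {f \<in> frames n N. flag_of n f \<in> U}"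
  unfolding flag_top_def using istopology_flag_top by (simp add: topology_inverse')

lemma schubert_cell_if_jumps:
  assumes V: "V \<in> Fl n N"
    and w: "inj_on w {1..n}" "w ` {1..n} \<subseteq> {1..N}"
    and jumps: "\<And>j m. j \<le> n \<Longrightarrow> is_jump (V j) m \<Longrightarrow> m \<in> w ` {1..j}"
  shows "V \<in> schubert_cell n N w"
  unfolding schubert_cell_def
proof (intro CollectI conjI V allI impI)
  fix j m assume j: "j \<le> n" and m: "m \<le> N"
  note V_j = Fl_D[OF V j]
  let ?J = "\<lambda>m. {m' \<in> {1..m}. is_jump (V j) m'}"
  have inj_j: "inj_on w {1..j}" using inj_on_subset[OF w(1)] j by auto
  have "card (?J N) = cdim (V j \<inter> Ecoord N)"
    using cdim_inter_Ecoord_eq_card_jumps[OF V_j(1,2)] by simp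
  also have "V j \<inter> Ecoord N = V j" using V_j(2) by (auto simp: CN_eq_Ecoord)
  finally have "card (?J N) = card (w ` {1..j})" using V_j(3) inj_j by (simp add: card_image)
  moreover have "?J N \<subseteq> w ` {1..j}" using jumps[OF j] by auto
  ultimately have all_jumps: "?J N = w ` {1..j}"
    by (intro card_subset_eq) auto
  have "?J m = w ` {l \<in> {1..j}. w l \<le> m}"
  proof (intro equalityI subsetI)
    fix m' assume m': "m' \<in> ?J m"
    then have "m' \<in> w ` {1..j}" using all_jumps m by auto
    then show "m' \<in> w ` {l \<in> {1..j}. w l \<le> m}" using m' by auto
  next
    fix m' assume "m' \<in> w ` {l \<in> {1..j}. w l \<le> m}"
    then obtain l where l: "l \<in> {1..j}" "w l \<le> m" "m' = w l" by auto
    then have "m' \<in> ?J N" unfolding all_jumps by blast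
    then show "m' \<in> ?J m" using l by auto
  qed
  moreover have "inj_on w {l \<in> {1..j}. w l \<le> m}" by (rule inj_on_subset[OF inj_j]) auto
  ultimately show "cdim (V j \<inter> Ecoord m) = card {l \<in> {1..j}. w l \<le> m}"
    using cdim_inter_Ecoord_eq_card_jumps[OF V_j(1,2)] by (simp add: card_image)
qed

definition perm_frame :: "nat \<Rightarrow> (nat \<Rightarrow> nat) \<Rightarrow> nat \<Rightarrow> cvec" where
  "perm_frame n w = (\<lambda>l. if l \<in> {1..n} then ebas (w l) else 0)"

lemma perm_frame_in_frames:
  assumes "inj_on w {1..n}" "w ` {1..n} \<subseteq> {1..N}"
  shows "perm_frame n w \<in> frames n N"
proof -
  have image: "perm_frame n w ` {1..n} = ebas ` (w ` {1..n})" by (force simp: perm_frame_def)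
  have "inj_on (perm_frame n w) {1..n}"
  proof (rule inj_onI)
    fix x y assume xy: "x \<in> {1..n}" "y \<in> {1..n}" "perm_frame n w x = perm_frame n w y"
    then have "w x = w y" by (auto simp: perm_frame_def ebas_def fun_eq_iff split: if_splits)
    then show "x = y" using assms(1) xy by (auto dest: inj_onD)
  qed
  moreover have "perm_frame n w l \<in> CN N" if "l \<in> {1..n}" for l
    using that assms(2) by (auto simp: perm_frame_def CN_def ebas_def image_subset_iff)
  ultimately show ?thesis
    unfolding frames_def using image ebas_independent[of "w ` {1..n}"] by (auto simp: perm_frame_def)
qed

lemma flag_of_perm_frame: "flag_of n (perm_frame n w) = perm_flag n w"
proof
  fix j
  have "perm_frame n w ` {1..min j n} = (ebas \<circ> w) ` {1..min j n}" by (force simp: perm_frame_def)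
  then show "flag_of n (perm_frame n w) j = perm_flag n w j"
    by (simp add: flag_of_def perm_flag_def)
qed

section \<open>The nilpotent map \<open>x\<close>\<close>

lemma xmap_add: "xmap n (u + v) = xmap n u + xmap n v"
  by (auto simp: xmap_def fun_eq_iff)

lemma xmap_diff: "xmap n (u - v) = xmap n u - xmap n v"
  by (auto simp: xmap_def fun_eq_iff)

lemma xmap_scale: "xmap n (cscale c v) = cscale c (xmap n v)"
  by (auto simp: xmap_def fun_eq_iff cscale_apply)

lemma xmap_cspan_subset:
  assumes "csubspace T" "xmap n ` S \<subseteq> T"
  shows "xmap n ` cspan S \<subseteq> T"
proof
  fix y assume "y \<in> xmap n ` cspan S"
  then obtain v where v: "v \<in> cspan S" "y = xmap n v" by auto
  have "xmap n v \<in> T" using v(1)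
  proof (induction rule: cv.span_induct_alt)
    case base
    then show ?case using assms(1) cv.subspace_0 by (simp add: xmap_def zero_fun_def)
  next
    case (step c x y)
    have "xmap n (cscale c x + y) = cscale c (xmap n x) + xmap n y"
      by (simp only: xmap_add xmap_scale)
    moreover have "xmap n x \<in> T" using step assms by auto
    ultimately show ?case using step assms by (metis cv.subspace_add cv.subspace_scale)
  qed
  then show "y \<in> T" using v by simp
qed

lemma xmap_in_Ecoord: "xmap n v \<in> Ecoord (n - 1)"
  by (auto simp: xmap_def Ecoord_iff)

lemma xmap_Ecoord_zero: "v \<in> Ecoord (n - 1) \<Longrightarrow> xmap n v = 0"
  by (auto simp: xmap_def Ecoord_iff fun_eq_iff)

lemma xmap_ebas:
  "2 \<le> n \<Longrightarrow> n \<le> m \<Longrightarrow> m \<le> 2 * n - 2 \<Longrightarrow> xmap n (ebas m) = ebas (m - (n - 1))"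
  by (auto simp: xmap_def ebas_def fun_eq_iff)

lemma Ecoord_subset_xmap_image:
  assumes "2 * n - 2 \<le> N"
  shows "Ecoord (n - 1) \<subseteq> xmap n ` CN N"
proof
  fix v assume "v \<in> Ecoord (n - 1)"
  then have v0: "\<And>k. k \<notin> {1..n - 1} \<Longrightarrow> v k = 0" by (simp add: Ecoord_iff)
  let ?u = "\<lambda>m. if n \<le> m \<and> m \<le> 2 * n - 2 then v (m - (n - 1)) else 0"
  have "?u \<in> CN N" using assms v0 by (auto simp: CN_def)
  moreover have "xmap n ?u = v"
  proof
    fix k show "xmap n ?u k = v k"
      using v0[of k] by (cases "1 \<le> k \<and> k \<le> n - 1") (auto simp: xmap_def)
  qed
  ultimately show "v \<in> xmap n ` CN N" by force
qed

text \<open>The flag map is open: a triangular change of frame, continuous in the frame, moves any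
  frame of a flag to any other frame of the same flag.\<close>

definition tri_change :: "nat \<Rightarrow> (nat \<Rightarrow> nat \<Rightarrow> complex) \<Rightarrow> (nat \<Rightarrow> cvec) \<Rightarrow> nat \<Rightarrow> cvec" where
  "tri_change n B f = (\<lambda>l. if l \<in> {1..n} then (\<Sum>p\<in>{1..l}. cscale (B p l) (f p)) else 0)"

lemma continuous_on_frame_coord: "continuous_on UNIV (\<lambda>g::nat \<Rightarrow> cvec. g l k)"
  by (rule continuous_on_product_then_coordinatewise[OF continuous_on_product_coordinates])

lemma open_frame_coord_vimage: "open S \<Longrightarrow> open {g::nat \<Rightarrow> cvec. g l k \<in> S}"
  using open_vimage[OF _ continuous_on_frame_coord, of S l k] by (simp add: vimage_def)

lemma continuous_on_tri_change: "continuous_on UNIV (tri_change n B)"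
proof (intro continuous_on_coordinatewise_then_product)
  fix l k
  show "continuous_on UNIV (\<lambda>f. tri_change n B f l k)"
  proof (cases "l \<in> {1..n}")
    case True
    then have "(\<lambda>f. tri_change n B f l k) = (\<lambda>f. \<Sum>p\<in>{1..l}. B p l * f p k)"
      by (simp add: tri_change_def sum_cvec_apply cscale_apply)
    then show ?thesis
      by (simp only:) (intro continuous_on_sum continuous_on_mult continuous_on_const
          continuous_on_frame_coord)
  next
    case False
    then have "tri_change n B f l k = 0" for f unfolding tri_change_def by auto
    then show ?thesis by simp
  qed
qed

lemma cspan_insert_cscale:
  assumes "c \<noteq> 0"
  shows "cspan (insert (cscale c x) S) = cspan (insert x S)"
proof -
  have "(\<exists>k. y - cscale k (cscale c x) \<in> cspan S) \<longleftrightarrow> (\<exists>k. y - cscale k x \<in> cspan S)" for y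
  proof
    assume "\<exists>k. y - cscale k (cscale c x) \<in> cspan S"
    then show "\<exists>k. y - cscale k x \<in> cspan S" by (metis cv.scale_scale)
  next
    assume "\<exists>k. y - cscale k x \<in> cspan S"
    then obtain k where "y - cscale k x \<in> cspan S" ..
    then show "\<exists>k. y - cscale k (cscale c x) \<in> cspan S"
      using assms by (intro exI[of _ "k / c"]) (simp add: cv.scale_scale)
  qed
  then show ?thesis unfolding cv.span_insert by simp
qed

lemma cspan_tri_change:
  assumes diag: "\<And>l. l \<in> {1..n} \<Longrightarrow> B l l \<noteq> 0" and "j \<le> n"
  shows "cspan (tri_change n B f ` {1..j}) = cspan (f ` {1..j})"
  using \<open>j \<le> n\<close>
proof (induction j)
  case 0
  then show ?case by simp
next
  case (Suc j)
  let ?g = "tri_change n B f"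
  let ?R = "\<Sum>p\<in>{1..j}. cscale (B p (Suc j)) (f p)"
  have "?g (Suc j) = cscale (B (Suc j) (Suc j)) (f (Suc j)) + ?R"
    using Suc.prems by (simp add: tri_change_def atLeastAtMostSuc_conv add.commute)
  then have diff: "?g (Suc j) - cscale (B (Suc j) (Suc j)) (f (Suc j)) \<in> cspan (f ` {1..j})"
    by (simp add: sum_cscale_in_cspan_image)
  have "cspan (?g ` {1..Suc j}) = cspan (insert (?g (Suc j)) (?g ` {1..j}))"
    by (simp add: atLeastAtMostSuc_conv)
  also have "\<dots> = cspan (insert (?g (Suc j)) (f ` {1..j}))"
    unfolding cv.span_insert using Suc by simp
  also have "\<dots> = cspan (insert (cscale (B (Suc j) (Suc j)) (f (Suc j))) (f ` {1..j}))"
    by (rule cv.eq_span_insert_eq[OF diff])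
  also have "\<dots> = cspan (f ` {1..Suc j})"
    using diag Suc.prems by (simp add: cspan_insert_cscale atLeastAtMostSuc_conv)
  finally show ?case .
qed

lemma tri_change_in_frames:
  assumes f: "f \<in> frames n N" and diag: "\<And>l. l \<in> {1..n} \<Longrightarrow> B l l \<noteq> 0"
  shows "tri_change n B f \<in> frames n N" "flag_of n (tri_change n B f) = flag_of n f"
proof -
  let ?g = "tri_change n B f"
  have f1: "inj_on f {1..n}" "\<not> cdependent (f ` {1..n})" "\<And>l. l \<in> {1..n} \<Longrightarrow> f l \<in> CN N"
    using f by (auto simp: frames_def)
  note span_eq = cspan_tri_change[where B=B, OF diag]
  show "flag_of n ?g = flag_of n f"
    unfolding flag_of_def using span_eq by (auto simp: fun_eq_iff)
  have "\<not> cdependent (?g ` {1..n}) \<and> card (?g ` {1..n}) = n"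
  proof (rule spanning_set_independent[of _ n "f ` {1..n}"])
    show "card (?g ` {1..n}) \<le> n" using card_image_le[of "{1..n}" ?g] by simp
    show "card (f ` {1..n}) = n" using f1 by (simp add: card_image)
    show "f ` {1..n} \<subseteq> cspan (?g ` {1..n})" using span_eq[of n] cv.span_superset by auto
  qed (use f1 in auto)
  moreover have "?g l \<in> CN N" if "l \<in> {1..n}" for l
  proof -
    have "?g l \<in> cspan (?g ` {1..n})" using that by (auto intro: cv.span_base)
    also have "\<dots> = cspan (f ` {1..n})" using span_eq by simp
    also have "\<dots> \<subseteq> CN N" using f1 by (intro cspan_subset_CN) auto
    finally show ?thesis .
  qed
  ultimately show "?g \<in> frames n N"
    unfolding frames_def by (auto simp: tri_change_def intro: eq_card_imp_inj_on)
qed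

lemma flag_of_eq_imp_tri_change:
  assumes f: "f \<in> frames n N" and g: "g \<in> frames n N" and eq: "flag_of n f = flag_of n g"
  obtains B where "\<And>l. l \<in> {1..n} \<Longrightarrow> B l l \<noteq> 0" "tri_change n B f = g"
proof -
  have span_eq: "cspan (f ` {1..j}) = cspan (g ` {1..j})" if "j \<le> n" for j
    using that fun_cong[OF eq, of j] by (simp add: flag_of_le)
  have "\<forall>l\<in>{1..n}. \<exists>\<alpha>. g l = (\<Sum>p\<in>{1..l}. cscale (\<alpha> p) (f p))"
  proof
    fix l assume l: "l \<in> {1..n}"
    have "g l \<in> cspan (g ` {1..l})" using l by (auto intro: cv.span_base)
    then have "g l \<in> cspan (f ` {1..l})" using span_eq[of l] l by simp
    then show "\<exists>\<alpha>. g l = (\<Sum>p\<in>{1..l}. cscale (\<alpha> p) (f p))"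
      by (rule in_cspan_image_imp_sum[rotated]) simp
  qed
  then obtain A where A: "\<And>l. l \<in> {1..n} \<Longrightarrow> g l = (\<Sum>p\<in>{1..l}. cscale (A l p) (f p))"
    by metis
  define B where "B = (\<lambda>p l. A l p)"
  have "tri_change n B f = g"
    using A g by (auto simp: fun_eq_iff tri_change_def B_def frames_def)
  moreover have "B l l \<noteq> 0" if l: "l \<in> {1..n}" for l
  proof
    assume zero: "B l l = 0"
    have "{1..l} = insert l {1..l - 1}" "l \<notin> {1..l - 1}" using l by auto
    then have "g l = (\<Sum>p\<in>{1..l - 1}. cscale (B p l) (f p))"
      using A[OF l] zero by (simp add: B_def)
    then have "g l \<in> cspan (f ` {1..l - 1})" by (simp add: sum_cscale_in_cspan_image)
    moreover have "l - 1 \<le> n" using l by auto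
    ultimately have "g l \<in> cspan (g ` {1..l - 1})" using span_eq[of "l - 1"] by simp
    moreover have g1: "inj_on g {1..n}" "\<not> cdependent (g ` {1..n})"
      using g by (auto simp: frames_def)
    have "g p \<noteq> g l" if "p \<in> {1..l - 1}" for p
    proof -
      have "p \<in> {1..n}" "p \<noteq> l" using that l by auto
      then show ?thesis using inj_onD[OF g1(1) _ _ l] by blast
    qed
    then have "g ` {1..l - 1} \<subseteq> g ` {1..n} - {g l}"
      using l by auto
    ultimately have "g l \<in> cspan (g ` {1..n} - {g l})" using cv.span_mono by blast
    then show False using g1 l by (auto simp: cv.dependent_def)
  qed
  ultimately show ?thesis using that by blast
qed

lemma openin_flag_top_image:
  assumes T: "open T"
  shows "openin (flag_top n N) (flag_of n ` (frames n N \<inter> T))"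
  unfolding openin_flag_top
proof
  show "flag_of n ` (frames n N \<inter> T) \<subseteq> Fl n N" using flag_of_in_Fl by auto
  let ?P = "{f \<in> frames n N. flag_of n f \<in> flag_of n ` (frames n N \<inter> T)}"
  show "openin (top_of_set (frames n N)) ?P"
    unfolding openin_subopen[of _ ?P]
  proof
    fix f assume "f \<in> ?P"
    then obtain g where f: "f \<in> frames n N" and g: "g \<in> frames n N" "g \<in> T"
      and eq: "flag_of n f = flag_of n g"
      by auto
    obtain B where diag: "\<And>l. l \<in> {1..n} \<Longrightarrow> B l l \<noteq> 0" and fg: "tri_change n B f = g"
      using flag_of_eq_imp_tri_change[OF f g(1) eq] by blast
    let ?T' = "frames n N \<inter> (tri_change n B -` T)"
    have "openin (top_of_set (frames n N)) ?T'"
      using open_vimage[OF T continuous_on_tri_change] by auto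
    moreover have "f \<in> ?T'" using f fg g by auto
    moreover have "?T' \<subseteq> ?P"
    proof
      fix h assume h: "h \<in> ?T'"
      then have "tri_change n B h \<in> frames n N \<inter> T"
        using tri_change_in_frames(1)[where B=B, OF _ diag] by auto
      moreover have "flag_of n h = flag_of n (tri_change n B h)"
        using tri_change_in_frames(2)[where B=B, OF _ diag] h by auto
      ultimately show "h \<in> ?P" using h by auto
    qed
    ultimately show "\<exists>T. openin (top_of_set (frames n N)) T \<and> f \<in> T \<and> T \<subseteq> ?P" by blast
  qed
qed

lemma flag_of_in_topspace: "f \<in> frames n N \<Longrightarrow> flag_of n f \<in> topspace (flag_top n N)"
  using openin_subset[OF openin_flag_top_image[of UNIV n N]] by auto

section \<open>The components \<open>K\<^sup>i\<close>\<close>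

lemma Kcomp_meets_openin:
  assumes "V \<in> Kcomp n s i" "openin (flag_top n (n + s - 1)) U" "V \<in> U"
  obtains y where "y \<in> schubert_cell n (n + s - 1) (wi n s i)" "y \<in> DeltaY n s" "y \<in> U"
proof -
  let ?X = "subtopology (flag_top n (n + s - 1)) (DeltaY n s)"
  have "openin ?X (U \<inter> DeltaY n s)" by (rule openin_subtopology_Int[OF assms(2)])
  moreover have "V \<in> DeltaY n s" "\<And>T. V \<in> T \<Longrightarrow> openin ?X T
      \<Longrightarrow> \<exists>y. y \<in> schubert_cell n (n + s - 1) (wi n s i) \<inter> DeltaY n s \<and> y \<in> T"
    using assms(1) by (auto simp: Kcomp_def in_closure_of)
  ultimately show ?thesis using assms(3) that by blast
qed

lemma in_Kcomp_if_curve: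
  fixes H :: "real \<Rightarrow> nat \<Rightarrow> cvec"
  assumes H: "continuous_on UNIV H" and H0: "H 0 \<in> frames n (n + s - 1)"
    and VY: "flag_of n (H 0) \<in> DeltaY n s"
    and good: "\<And>t. 0 < t \<Longrightarrow> t < 1 \<Longrightarrow> H t \<in> frames n (n + s - 1) \<and>
        flag_of n (H t) \<in> schubert_cell n (n + s - 1) (wi n s i) \<inter> DeltaY n s"
  shows "flag_of n (H 0) \<in> Kcomp n s i"
proof -
  define N where "N = n + s - 1"
  let ?X = "subtopology (flag_top n N) (DeltaY n s)"
  have "\<exists>y. y \<in> schubert_cell n N (wi n s i) \<inter> DeltaY n s \<and> y \<in> T"
    if T: "flag_of n (H 0) \<in> T" "openin ?X T" for T
  proof -
    obtain U where U: "openin (flag_top n N) U" "T = U \<inter> DeltaY n s"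
      using T(2) by (auto simp: openin_subtopology)
    then obtain T' where T': "open T'" "{f \<in> frames n N. flag_of n f \<in> U} = frames n N \<inter> T'"
      by (auto simp: openin_flag_top openin_open)
    have "H 0 \<in> T'" using T' T U H0 by (auto simp: N_def)
    then obtain d where d: "d > 0" "ball 0 d \<subseteq> H -` T'"
      using open_vimage[OF T'(1) H] by (meson open_contains_ball vimageI2)
    define t where "t = min (d / 2) (1 / 2)"
    have t: "0 < t" "t < 1" "t \<in> ball 0 d" using d by (auto simp: t_def)
    then have "H t \<in> T'" using d(2) by blast
    with good[OF t(1,2)] T' U show ?thesis by (auto simp: N_def)
  qed
  then have "flag_of n (H 0) \<in> ?X closure_of (schubert_cell n N (wi n s i) \<inter> DeltaY n s)"
    using flag_of_in_topspace[OF H0] VY by (auto simp: in_closure_of N_def)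
  then show ?thesis by (simp add: Kcomp_def N_def)
qed

section \<open>Necessary conditions\<close>

lemma DeltaY_D:
  assumes "V \<in> DeltaY n s"
  shows "V \<in> Fl n (n + s - 1)" "xmap n ` CN (n + s - 1) \<subseteq> V n"
    "\<And>j. j \<le> n \<Longrightarrow> xmap n ` V j \<subseteq> V j"
  using assms by (auto simp: DeltaY_def)

lemma wi_inj_on_range:
  assumes "n \<ge> 2" "s \<ge> n - 1" "1 \<le> i" "i \<le> n"
  shows "inj_on (wi n s i) {1..n}" "wi n s i ` {1..n} \<subseteq> {1..n + s - 1}"
  using assms by (auto simp: wi_def inj_on_def split: if_splits)

lemma schubert_cell_wi_prefix:
  assumes N: "N = n + s - 1" and n2: "n \<ge> 2" and s: "s \<ge> n - 1" and i: "1 \<le> i" "i \<le> n"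
    and V: "V \<in> schubert_cell n N (wi n s i)"
  shows "V (i - 1) \<subseteq> Ecoord (n - 1)" "V (i - 1) = V i \<inter> Ecoord (N - 1)"
proof -
  have VF: "V \<in> Fl n N" using V by (simp add: schubert_cell_def)
  have cell: "\<And>j m. j \<le> n \<Longrightarrow> m \<le> N \<Longrightarrow> cdim (V j \<inter> Ecoord m) = card {l \<in> {1..j}. wi n s i l \<le> m}"
    using V by (auto simp: schubert_cell_def)
  note V_j = Fl_D[OF VF]
  have "V (i - 1) \<inter> Ecoord (n - 1) = V (i - 1)"
  proof (rule csubspace_eq_if_cdim_le[where N=N])
    show "csubspace (V (i - 1) \<inter> Ecoord (n - 1))"
      using V_j[of "i - 1"] i by (simp add: cv.subspace_inter csubspace_Ecoord)
    have "{l \<in> {1..i - 1}. wi n s i l \<le> n - 1} = {1..i - 1}" by (auto simp: wi_def)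
    then show "cdim (V (i - 1)) \<le> cdim (V (i - 1) \<inter> Ecoord (n - 1))"
      using cell[of "i - 1" "n - 1"] V_j[of "i - 1"] i N by simp
  qed (use V_j[of "i - 1"] i in auto)
  then show low: "V (i - 1) \<subseteq> Ecoord (n - 1)" by blast
  show "V (i - 1) = V i \<inter> Ecoord (N - 1)"
  proof (rule csubspace_eq_if_cdim_le[where N=N])
    show "V (i - 1) \<subseteq> V i \<inter> Ecoord (N - 1)"
    proof -
      have "Ecoord (n - 1) \<subseteq> Ecoord (N - 1)" using N n2 s by (intro Ecoord_mono) auto
      then show ?thesis using low Fl_mono[OF VF, of "i - 1" i] by auto
    qed
    show "csubspace (V i \<inter> Ecoord (N - 1))"
      using V_j[of i] i by (simp add: cv.subspace_inter csubspace_Ecoord)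
    have "{l \<in> {1..i}. wi n s i l \<le> N - 1} = {1..i - 1}" using i N n2 s by (auto simp: wi_def)
    then show "cdim (V i \<inter> Ecoord (N - 1)) \<le> cdim (V (i - 1))"
      using cell[of i "N - 1"] V_j[of "i - 1"] i by simp
  qed (use V_j[of "i - 1"] V_j[of i] i in auto)
qed

lemma schubert_cell_wi_DeltaY_top:
  assumes N: "N = n + s - 1" and n2: "n \<ge> 2" and s: "s \<ge> n - 1" and i: "1 \<le> i" "i \<le> n"
    and V: "V \<in> schubert_cell n N (wi n s i)" and VY: "V \<in> DeltaY n s"
  shows "Ecoord (n - 1) = V n \<inter> Ecoord (N - 1)"
proof (rule csubspace_eq_if_cdim_le[where N=N])
  have VF: "V \<in> Fl n N" using V by (simp add: schubert_cell_def)
  have "Ecoord (n - 1) \<subseteq> xmap n ` CN N" using N s by (intro Ecoord_subset_xmap_image) auto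
  moreover have "Ecoord (n - 1) \<subseteq> Ecoord (N - 1)" using N n2 s by (intro Ecoord_mono) auto
  ultimately show "Ecoord (n - 1) \<subseteq> V n \<inter> Ecoord (N - 1)"
    using DeltaY_D(2)[OF VY] N by auto
  show "csubspace (V n \<inter> Ecoord (N - 1))"
    using Fl_D[OF VF, of n] by (simp add: cv.subspace_inter csubspace_Ecoord)
  show "V n \<inter> Ecoord (N - 1) \<subseteq> CN N" using Fl_D[OF VF, of n] by auto
  have "{l \<in> {1..n}. wi n s i l \<le> N - 1} = {1..n} - {i}" using i N n2 s by (auto simp: wi_def)
  then show "cdim (V n \<inter> Ecoord (N - 1)) \<le> cdim (Ecoord (n - 1))"
    using V i N by (simp add: schubert_cell_def cdim_Ecoord)
qed (rule csubspace_Ecoord)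

text \<open>Modulo \<open>V\<^sub>n \<inter> E\<^sub>N\<^sub>-\<^sub>1 = E\<^sub>n\<^sub>-\<^sub>1 = ker x\<close>, the space \<open>V\<^sub>n\<close> is spanned by one vector of \<open>V\<^sub>i\<close>
  with nonzero \<open>N\<close>-coordinate, whose image under \<open>x\<close> lies in \<open>V\<^sub>i \<inter> E\<^sub>N\<^sub>-\<^sub>1 = V\<^sub>i\<^sub>-\<^sub>1\<close>.\<close>

lemma schubert_cell_wi_DeltaY_xmap:
  assumes N: "N = n + s - 1" and n2: "n \<ge> 2" and s: "s \<ge> n - 1" and i: "1 \<le> i" "i \<le> n"
    and V: "V \<in> schubert_cell n N (wi n s i)" and VY: "V \<in> DeltaY n s"
  shows "xmap n ` V n \<subseteq> V (i - 1)"
proof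
  have VF: "V \<in> Fl n N" using V by (simp add: schubert_cell_def)
  note V_j = Fl_D[OF VF]
  note prefix = schubert_cell_wi_prefix[OF N n2 s i V]
  have "cdim (V i) \<noteq> cdim (V (i - 1))" using V_j(3)[of i] V_j(3)[of "i - 1"] i by simp
  then have "\<not> V i \<subseteq> V (i - 1)" using Fl_mono[OF VF, of "i - 1" i] by auto
  then obtain v where v: "v \<in> V i" "v \<notin> V (i - 1)" by blast
  have v_n: "v \<in> V n" using v Fl_mono[OF VF, of i n] i by auto
  have v_N: "v N \<noteq> 0"
  proof
    assume "v N = 0"
    then have "v \<in> Ecoord (N - 1)" using V_j[of i] i v by (intro CN_last_zero_imp_Ecoord) auto
    then show False using v prefix(2) by blast
  qed
  fix y assume "y \<in> xmap n ` V n"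
  then obtain u where u: "u \<in> V n" "y = xmap n u" by auto
  let ?c = "u N / v N"
  have "u - cscale ?c v \<in> V n"
    using u v_n V_j[of n] cv.subspace_diff cv.subspace_scale by blast
  moreover from this have "u - cscale ?c v \<in> Ecoord (N - 1)"
    using v_N V_j[of n] by (intro CN_last_zero_imp_Ecoord) (blast, simp add: cscale_apply)
  ultimately have "u - cscale ?c v \<in> Ecoord (n - 1)"
    using schubert_cell_wi_DeltaY_top[OF N n2 s i V VY] by auto
  then have "xmap n u = cscale ?c (xmap n v)"
    using xmap_Ecoord_zero[of "u - cscale ?c v" n] by (simp add: xmap_diff xmap_scale)
  moreover have "xmap n v \<in> V (i - 1)"
  proof -
    have "Ecoord (n - 1) \<subseteq> Ecoord (N - 1)" using N n2 s by (intro Ecoord_mono) auto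
    moreover have "xmap n v \<in> V i" using DeltaY_D(3)[OF VY, of i] v(1) i by auto
    ultimately show ?thesis using xmap_in_Ecoord[of n v] prefix(2) by blast
  qed
  moreover have "csubspace (V (i - 1))" using V_j[of "i - 1"] i by simp
  ultimately show "y \<in> V (i - 1)" using u by (metis cv.subspace_scale)
qed

lemma perm_flag_DeltaY_covers:
  assumes n2: "n \<ge> 2" and s: "s \<ge> n - 1" and VY: "perm_flag n w \<in> DeltaY n s"
  shows "{1..n - 1} \<subseteq> w ` {1..n}"
proof
  fix k assume k: "k \<in> {1..n - 1}"
  have "ebas k \<in> Ecoord (n - 1)" using k by (auto simp: Ecoord_iff ebas_def)
  also have "\<dots> \<subseteq> xmap n ` CN (n + s - 1)" using Ecoord_subset_xmap_image[of n "n + s - 1"] s by auto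
  also have "\<dots> \<subseteq> perm_flag n w n" by (rule DeltaY_D(2)[OF VY])
  also have "\<dots> = cspan (ebas ` (w ` {1..n}))" by (simp add: perm_flag_def image_comp)
  finally show "k \<in> w ` {1..n}"
    using cspan_ebas_coord_zero[of "ebas k" "w ` {1..n}" k] by (auto simp: ebas_def)
qed

lemma perm_flag_DeltaY_large_unique:
  assumes n2: "n \<ge> 2" and s: "s \<ge> n - 1" and inj: "inj_on w {1..n}"
    and rng: "w ` {1..n} \<subseteq> {1..n + s - 1}" and VY: "perm_flag n w \<in> DeltaY n s"
  shows "\<exists>!b. b \<in> {1..n} \<and> w b \<ge> n"
proof (rule ex_ex1I)
  show "\<exists>b. b \<in> {1..n} \<and> w b \<ge> n"
  proof (rule ccontr)
    assume "\<not> ?thesis"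
    then have "w ` {1..n} \<subseteq> {1..n - 1}" using rng by force
    then have "card (w ` {1..n}) \<le> n - 1"
      by (metis card_atLeastAtMost card_mono finite_atLeastAtMost diff_Suc_1)
    then show False using inj n2 by (simp add: card_image)
  qed
next
  fix b b' assume b: "b \<in> {1..n} \<and> w b \<ge> n" and b': "b' \<in> {1..n} \<and> w b' \<ge> n"
  show "b = b'"
  proof (rule ccontr)
    assume ne: "b \<noteq> b'"
    have "{1..n - 1} \<subseteq> w ` ({1..n} - {b, b'})"
    proof
      fix k assume k: "k \<in> {1..n - 1}"
      then obtain l where l: "l \<in> {1..n}" "k = w l"
        using perm_flag_DeltaY_covers[OF n2 s VY] by blast
      then have "l \<noteq> b" "l \<noteq> b'" using k b b' by auto
      then show "k \<in> w ` ({1..n} - {b, b'})" using l by blast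
    qed
    then have "n - 1 \<le> card (w ` ({1..n} - {b, b'}))"
      by (metis card_atLeastAtMost card_mono finite_Diff finite_atLeastAtMost finite_imageI diff_Suc_1)
    also have "\<dots> \<le> card ({1..n} - {b, b'})" by (rule card_image_le) auto
    also have "\<dots> = n - 2" using b b' ne by (simp add: card_Diff_subset)
    finally show False using n2 by simp
  qed
qed

lemma perm_flag_DeltaY_image_small:
  assumes n2: "n \<ge> 2" and s: "s \<ge> n - 1" and inj: "inj_on w {1..n}"
    and rng: "w ` {1..n} \<subseteq> {1..n + s - 1}" and VY: "perm_flag n w \<in> DeltaY n s"
    and b: "b \<in> {1..n}" "w b \<ge> n"
  shows "w ` ({1..n} - {b}) = {1..n - 1}"
proof
  show "w ` ({1..n} - {b}) \<subseteq> {1..n - 1}"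
  proof
    fix k assume "k \<in> w ` ({1..n} - {b})"
    then obtain l where l: "l \<in> {1..n}" "l \<noteq> b" "k = w l" by blast
    then have "\<not> w l \<ge> n" using perm_flag_DeltaY_large_unique[OF assms(1-5)] b by blast
    moreover have "w l \<in> {1..n + s - 1}" using rng l(1) by blast
    ultimately show "k \<in> {1..n - 1}" using l(3) by auto
  qed
  show "{1..n - 1} \<subseteq> w ` ({1..n} - {b})"
  proof
    fix k assume k: "k \<in> {1..n - 1}"
    then obtain l where l: "l \<in> {1..n}" "k = w l"
      using perm_flag_DeltaY_covers[OF n2 s VY] by blast
    then have "l \<noteq> b" using k b by auto
    then show "k \<in> w ` ({1..n} - {b})" using l by blast
  qed
qed

text \<open>Since \<open>x e\<^sub>w\<^sub>b = e\<^sub>w\<^sub>b\<^sub>-\<^sub>(\<^sub>n\<^sub>-\<^sub>1\<^sub>)\<close> must lie in \<open>V\<^sub>b\<close>, the partner \<open>a\<close> comes before \<open>b\<close>.\<close>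

lemma perm_flag_DeltaY_partner:
  assumes n2: "n \<ge> 2" and s: "s \<ge> n - 1" and inj: "inj_on w {1..n}"
    and VY: "perm_flag n w \<in> DeltaY n s"
    and b: "b \<in> {1..n}" "w b \<ge> n" "w b \<le> 2 * n - 2"
  shows "\<exists>a\<in>{1..n}. w a = w b - (n - 1)"
    and "\<And>a. a \<in> {1..n} \<Longrightarrow> w a = w b - (n - 1) \<Longrightarrow> a < b"
proof -
  have r: "w b - (n - 1) \<in> {1..n - 1}" using b n2 by auto
  then show "\<exists>a\<in>{1..n}. w a = w b - (n - 1)"
    using perm_flag_DeltaY_covers[OF n2 s VY] by force
  fix a assume a: "a \<in> {1..n}" "w a = w b - (n - 1)"
  have "ebas (w b) \<in> perm_flag n w b"
    using b by (auto simp: perm_flag_def intro!: cv.span_base)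
  moreover have "xmap n ` perm_flag n w b \<subseteq> perm_flag n w b" using DeltaY_D(3)[OF VY] b by simp
  ultimately have "ebas (w a) \<in> cspan (ebas ` (w ` {1..b}))"
    using a b n2 by (auto simp: xmap_ebas perm_flag_def image_comp)
  then have "w a \<in> w ` {1..b}"
    using cspan_ebas_coord_zero[of "ebas (w a)" "w ` {1..b}" "w a"] by (auto simp: ebas_def)
  then obtain a' where a': "a' \<in> {1..b}" "w a' = w a" by auto
  then have "a' = a" using inj_onD[OF inj a'(2)] a b by auto
  moreover have "a \<noteq> b" using a b r by auto
  ultimately show "a < b" using a' by auto
qed

lemma openin_flag_top_prefix_not_low:
  assumes "1 \<le> i" "i \<le> n"
  shows "openin (flag_top n N) {V \<in> Fl n N. \<not> V (i - 1) \<subseteq> Ecoord (n - 1)}"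
    (is "openin _ ?U")
proof -
  let ?Q = "\<Union>l\<in>{1..i - 1}. \<Union>k\<in>- {1..n - 1}. {f::nat \<Rightarrow> cvec. f l k \<in> - {0}}"
  have "open ?Q" by (intro open_UN ballI open_frame_coord_vimage) auto
  moreover have "{f \<in> frames n N. flag_of n f \<in> ?U} = frames n N \<inter> ?Q"
  proof (intro equalityI subsetI)
    fix f assume "f \<in> {f \<in> frames n N. flag_of n f \<in> ?U}"
    then have f: "f \<in> frames n N" "\<not> cspan (f ` {1..i - 1}) \<subseteq> Ecoord (n - 1)"
      using assms by (auto simp: flag_of_le)
    then obtain l where l: "l \<in> {1..i - 1}" "f l \<notin> Ecoord (n - 1)"
      using cv.span_minimal csubspace_Ecoord by blast
    then obtain k where "k \<notin> {1..n - 1}" "f l k \<noteq> 0" by (auto simp: Ecoord_iff)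
    then show "f \<in> frames n N \<inter> ?Q" using f l by auto
  next
    fix f assume "f \<in> frames n N \<inter> ?Q"
    then obtain l k where f: "f \<in> frames n N"
      and l: "l \<in> {1..i - 1}" "k \<notin> {1..n - 1}" "f l k \<noteq> 0"
      by auto
    have "f l \<notin> Ecoord (n - 1)" using l by (auto simp: Ecoord_iff)
    moreover have "f l \<in> cspan (f ` {1..i - 1})" using l by (auto intro: cv.span_base)
    ultimately have "\<not> flag_of n f (i - 1) \<subseteq> Ecoord (n - 1)"
      using assms by (auto simp: flag_of_le)
    then show "f \<in> {f \<in> frames n N. flag_of n f \<in> ?U}" using f flag_of_in_Fl by auto
  qed
  ultimately show ?thesis by (auto simp: openin_flag_top openin_open_Int)
qed

lemma notin_Kcomp_if_prefix_not_low:
  assumes n2: "n \<ge> 2" and s: "s \<ge> n - 1" and i: "1 \<le> i" "i \<le> n"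
    and V: "V \<in> Fl n (n + s - 1)" and not_low: "\<not> V (i - 1) \<subseteq> Ecoord (n - 1)"
  shows "V \<notin> Kcomp n s i"
proof
  assume V_K: "V \<in> Kcomp n s i"
  have "V \<in> {V \<in> Fl n (n + s - 1). \<not> V (i - 1) \<subseteq> Ecoord (n - 1)}" using V not_low by simp
  then obtain y where "y \<in> schubert_cell n (n + s - 1) (wi n s i)"
    and "y \<in> {V \<in> Fl n (n + s - 1). \<not> V (i - 1) \<subseteq> Ecoord (n - 1)}"
    by (rule Kcomp_meets_openin[OF V_K openin_flag_top_prefix_not_low[OF i]])
  then show False using schubert_cell_wi_prefix(1)[OF refl n2 s i] by blast
qed

text \<open>The vectors \<open>g\<^sub>p\<close> are \<open>\<epsilon>\<close>-close to distinct unit vectors \<open>e\<^sub>w\<^sub>p\<close>; looking at the coordinate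
  \<open>w q\<close> of a coefficient \<open>\<alpha>\<^sub>q\<close> of maximal modulus shows that all coefficients are \<open>2\<epsilon>\<close>-small.\<close>

lemma near_unit_combination_coeffs_small:
  fixes g :: "nat \<Rightarrow> cvec" and \<alpha> :: "nat \<Rightarrow> complex" and \<epsilon> :: real and L :: cvec
  assumes eps: "\<epsilon> > 0" "real n * \<epsilon> \<le> 1/4" "\<epsilon> \<le> 1/8"
    and I: "finite I" "card I \<le> n"
    and L: "\<And>k. L k = (\<Sum>p\<in>I. \<alpha> p * g p k)"
    and L_small: "\<And>q. q \<in> I \<Longrightarrow> cmod (L (w q)) < \<epsilon>"
    and diag: "\<And>q. q \<in> I \<Longrightarrow> cmod (g q (w q)) > 1 - \<epsilon>"
    and off_diag: "\<And>p q. p \<in> I \<Longrightarrow> q \<in> I \<Longrightarrow> p \<noteq> q \<Longrightarrow> cmod (g p (w q)) < \<epsilon>"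
    and q: "q \<in> I" "\<And>p. p \<in> I \<Longrightarrow> cmod (\<alpha> p) \<le> cmod (\<alpha> q)"
  shows "cmod (\<alpha> q) < 2 * \<epsilon>"
proof -
  define M where "M = cmod (\<alpha> q)"
  have M0: "M \<ge> 0" by (simp add: M_def)
  have split: "L (w q) = \<alpha> q * g q (w q) + (\<Sum>p\<in>I - {q}. \<alpha> p * g p (w q))"
    using L[of "w q"] q(1) I(1) by (simp add: sum.remove)
  have "cmod (\<Sum>p\<in>I - {q}. \<alpha> p * g p (w q)) \<le> (\<Sum>p\<in>I - {q}. cmod (\<alpha> p * g p (w q)))"
    by (rule norm_sum)
  also have "\<dots> \<le> (\<Sum>p\<in>I - {q}. M * \<epsilon>)"
  proof (rule sum_mono)
    fix p assume p: "p \<in> I - {q}"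
    then have "cmod (\<alpha> p) \<le> M" "cmod (g p (w q)) \<le> \<epsilon>"
      using q off_diag[of p q] by (auto simp: M_def)
    then show "cmod (\<alpha> p * g p (w q)) \<le> M * \<epsilon>" by (simp add: norm_mult mult_mono M0)
  qed
  also have "\<dots> \<le> real n * (M * \<epsilon>)"
    using I card_Diff1_le[of I q] M0 eps by (simp add: mult_right_mono)
  finally have rest: "cmod (\<Sum>p\<in>I - {q}. \<alpha> p * g p (w q)) \<le> real n * (M * \<epsilon>)" .
  have "M * (1 - \<epsilon>) \<le> cmod (\<alpha> q * g q (w q))"
    using diag[OF q(1)] M0 by (simp add: norm_mult M_def mult_left_mono)
  also have "\<dots> \<le> cmod (L (w q)) + cmod (\<Sum>p\<in>I - {q}. \<alpha> p * g p (w q))"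
    using norm_diff_ineq[of "\<alpha> q * g q (w q)" "\<Sum>p\<in>I - {q}. \<alpha> p * g p (w q)"]
    unfolding split by linarith
  finally have "M * (1 - \<epsilon>) < \<epsilon> + real n * (M * \<epsilon>)" using L_small[OF q(1)] rest by linarith
  then have main: "M - M * \<epsilon> < \<epsilon> + real n * (M * \<epsilon>)" by (simp add: right_diff_distrib)
  have "real n * (M * \<epsilon>) = M * (real n * \<epsilon>)" by (simp add: algebra_simps)
  also have "\<dots> \<le> M * (1/4)" using eps M0 by (intro mult_left_mono) auto
  finally have "real n * (M * \<epsilon>) \<le> M * (1/4)" .
  moreover have "M * \<epsilon> \<le> M * (1/8)" using eps M0 by (intro mult_left_mono) auto
  ultimately show ?thesis using main eps unfolding M_def[symmetric] by linarith
qed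

lemma near_unit_combination_small:
  fixes g :: "nat \<Rightarrow> cvec" and \<alpha> :: "nat \<Rightarrow> complex" and \<epsilon> :: real and L :: cvec
  assumes eps: "\<epsilon> > 0" "real n * \<epsilon> \<le> 1/4" "\<epsilon> \<le> 1/8"
    and I: "finite I" "card I \<le> n"
    and L: "\<And>k. L k = (\<Sum>p\<in>I. \<alpha> p * g p k)"
    and L_small: "\<And>q. q \<in> I \<Longrightarrow> cmod (L (w q)) < \<epsilon>"
    and diag: "\<And>q. q \<in> I \<Longrightarrow> cmod (g q (w q)) > 1 - \<epsilon>"
    and off_diag: "\<And>p q. p \<in> I \<Longrightarrow> q \<in> I \<Longrightarrow> p \<noteq> q \<Longrightarrow> cmod (g p (w q)) < \<epsilon>"
    and k0: "\<And>p. p \<in> I \<Longrightarrow> cmod (g p k0) < \<epsilon>"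
  shows "cmod (L k0) \<le> \<epsilon> / 2"
proof -
  have coeff: "cmod (\<alpha> p) \<le> 2 * \<epsilon>" if "p \<in> I" for p
  proof -
    let ?A = "(\<lambda>p. cmod (\<alpha> p)) ` I"
    have "Max ?A \<in> ?A" using I(1) that by (intro Max_in) auto
    then obtain q where "Max ?A = cmod (\<alpha> q)" "q \<in> I" by (rule imageE)
    moreover have "cmod (\<alpha> p) \<le> Max ?A" if "p \<in> I" for p using I(1) that by simp
    ultimately have q: "q \<in> I" "\<And>p. p \<in> I \<Longrightarrow> cmod (\<alpha> p) \<le> cmod (\<alpha> q)" by auto
    show ?thesis
      using near_unit_combination_coeffs_small[where g=g and \<alpha>=\<alpha> and L=L and w=w,
          OF eps I L L_small diag off_diag q] q(2)[OF that]
      by linarith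
  qed
  have "cmod (L k0) \<le> (\<Sum>p\<in>I. cmod (\<alpha> p * g p k0))"
    unfolding L by (rule norm_sum)
  also have "\<dots> \<le> (\<Sum>p\<in>I. 2 * \<epsilon> * \<epsilon>)"
  proof (rule sum_mono)
    fix p assume "p \<in> I"
    then have "cmod (\<alpha> p) \<le> 2 * \<epsilon>" "cmod (g p k0) \<le> \<epsilon>" using coeff k0 less_imp_le by auto
    then show "cmod (\<alpha> p * g p k0) \<le> 2 * \<epsilon> * \<epsilon>" using eps by (simp add: norm_mult mult_mono)
  qed
  also have "\<dots> \<le> real n * \<epsilon> * (2 * \<epsilon>)"
    using I eps by (simp add: mult_right_mono)
  also have "\<dots> \<le> 1/4 * (2 * \<epsilon>)" using eps by (intro mult_right_mono) auto
  finally show ?thesis by simp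
qed

lemma perm_flag_neighbourhood:
  assumes w: "inj_on w {1..n}" "w ` {1..n} \<subseteq> {1..N}" and eps: "\<epsilon> > 0"
  obtains U where "openin (flag_top n N) U" "perm_flag n w \<in> U"
    "\<And>y. y \<in> U \<Longrightarrow> \<exists>g\<in>frames n N. y = flag_of n g
        \<and> (\<forall>l\<in>{1..n}. \<forall>k\<in>{1..N}. cmod (g l k - (if k = w l then 1 else 0)) < \<epsilon>)"
proof -
  let ?F = "perm_frame n w"
  define Box where "Box = (\<Inter>lk\<in>{1..n} \<times> {1..N}.
      {g::nat \<Rightarrow> cvec. g (fst lk) (snd lk) \<in> ball (?F (fst lk) (snd lk)) \<epsilon>})"
  have "open Box" unfolding Box_def
    by (intro open_INT ballI open_frame_coord_vimage open_ball) auto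
  then have "openin (flag_top n N) (flag_of n ` (frames n N \<inter> Box))"
    by (rule openin_flag_top_image)
  moreover have "?F \<in> frames n N \<inter> Box"
    using perm_frame_in_frames[OF w] eps by (auto simp: Box_def)
  then have "perm_flag n w \<in> flag_of n ` (frames n N \<inter> Box)"
    using flag_of_perm_frame[of n w] by (metis image_eqI)
  moreover have "cmod (g l k - (if k = w l then 1 else 0)) < \<epsilon>"
    if "g \<in> Box" "l \<in> {1..n}" "k \<in> {1..N}" for g l k
    using that by (auto simp: Box_def perm_frame_def ebas_def dist_norm norm_minus_commute)
  ultimately show ?thesis using that by blast
qed

text \<open>\<open>x g\<^sub>b\<close> is close to \<open>e\<^sub>w\<^sub>a\<close> but small at the positions \<open>w\<^sub>1,\<dots>,w\<^sub>i\<^sub>-\<^sub>1\<close>, where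
  \<open>g\<^sub>1,\<dots>,g\<^sub>i\<^sub>-\<^sub>1\<close> are close to unit vectors.\<close>

lemma xmap_near_perm_frame_notin_prefix:
  fixes g :: "nat \<Rightarrow> cvec"
  assumes n2: "n \<ge> 2" and N: "2 * n - 2 \<le> N"
    and inj: "inj_on w {1..n}" and w_N: "w ` {1..n} \<subseteq> {1..N}"
    and b: "b \<in> {1..n}" "w b \<ge> n" "w b \<le> 2 * n - 2"
    and a: "a \<in> {1..n}" "w a = w b - (n - 1)" "a < b"
    and small: "\<And>l. l \<in> {1..n} \<Longrightarrow> l \<noteq> b \<Longrightarrow> w l \<le> n - 1"
    and i: "i \<le> a"
    and near: "\<And>l k. l \<in> {1..n} \<Longrightarrow> k \<in> {1..N}
      \<Longrightarrow> cmod (g l k - (if k = w l then 1 else 0)) < 1 / (4 * real n)"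
  shows "xmap n (g b) \<notin> cspan (g ` {1..i - 1})"
proof
  define \<epsilon> :: real where "\<epsilon> = 1 / (4 * real n)"
  have eps: "\<epsilon> > 0" "real n * \<epsilon> \<le> 1/4" "\<epsilon> \<le> 1/8" using n2 by (auto simp: \<epsilon>_def field_simps)
  assume "xmap n (g b) \<in> cspan (g ` {1..i - 1})"
  then obtain \<alpha> where \<alpha>: "xmap n (g b) = (\<Sum>p\<in>{1..i - 1}. cscale (\<alpha> p) (g p))"
    using in_cspan_image_imp_sum[of "{1..i - 1}" "xmap n (g b)" g] by auto
  let ?L = "xmap n (g b)"
  have L_coord: "?L k = g b (k + (n - 1))" if "k \<in> {1..n - 1}" for k using that by (simp add: xmap_def)
  have w_range: "w l \<in> {1..N}" if "l \<in> {1..n}" for l using w_N that by blast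
  have prefix: "q \<in> {1..n}" "q \<noteq> b" "q \<noteq> a" "w q \<in> {1..n - 1}" if "q \<in> {1..i - 1}" for q
    using that i a small[of q] w_range[of q] by auto
  have w_a: "w a \<in> {1..n - 1}" using a b n2 by auto
  have near_one: "cmod (g l (w l)) > 1 - \<epsilon>" if "l \<in> {1..n}" for l
    using near[OF that w_range[OF that]] norm_triangle_ineq2[of 1 "1 - g l (w l)"]
    by (simp add: norm_minus_commute \<epsilon>_def)
  have near_zero: "cmod (g p (w q)) < \<epsilon>" if "p \<in> {1..n}" "q \<in> {1..n}" "p \<noteq> q" for p q
  proof -
    have "w q \<noteq> w p" using inj_onD[OF inj _ that(2,1)] that(3) by auto
    then show ?thesis using near[OF that(1) w_range[OF that(2)]] by (simp add: \<epsilon>_def)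
  qed
  have "cmod (?L (w a)) \<le> \<epsilon> / 2"
  proof (rule near_unit_combination_small[OF eps])
    show "finite {1..i - 1}" "card {1..i - 1} \<le> n" using i a by auto
    show "\<And>k. ?L k = (\<Sum>p\<in>{1..i - 1}. \<alpha> p * g p k)"
      by (subst \<alpha>) (simp add: sum_cvec_apply cscale_apply)
  next
    fix q assume q: "q \<in> {1..i - 1}"
    have "w q + (n - 1) \<noteq> w b"
    proof
      assume "w q + (n - 1) = w b"
      then have "w q = w a" using a(2) by linarith
      then show False using inj_onD[OF inj _ prefix(1)[OF q] a(1)] prefix(3)[OF q] by blast
    qed
    moreover have "w q + (n - 1) \<in> {1..N}" using prefix[OF q] n2 N by auto
    then have "cmod (g b (w q + (n - 1)) - (if w q + (n - 1) = w b then 1 else 0)) < \<epsilon>"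
      unfolding \<epsilon>_def by (rule near[OF b(1)])
    ultimately show "cmod (?L (w q)) < \<epsilon>" using L_coord[OF prefix(4)[OF q]] by simp
    show "cmod (g q (w q)) > 1 - \<epsilon>" by (rule near_one[OF prefix(1)[OF q]])
    show "cmod (g q (w a)) < \<epsilon>" using near_zero prefix[OF q] a(1) by simp
  next
    fix p q assume "p \<in> {1..i - 1}" "q \<in> {1..i - 1}" "p \<noteq> q"
    then show "cmod (g p (w q)) < \<epsilon>" using near_zero prefix by simp
  qed
  moreover have "?L (w a) = g b (w b)" using L_coord[OF w_a] a b by simp
  ultimately have "cmod (g b (w b)) \<le> \<epsilon> / 2" by simp
  then show False using near_one[OF b(1)] eps by linarith
qed

lemma perm_flag_notin_Kcomp_if_le_partner:
  assumes n2: "n \<ge> 2" and s: "s \<ge> n - 1" and inj: "inj_on w {1..n}"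
    and rng: "w ` {1..n} \<subseteq> {1..n + s - 1}"
    and b: "b \<in> {1..n}" "w b \<ge> n" "w b \<le> 2 * n - 2"
    and a: "a \<in> {1..n}" "w a = w b - (n - 1)" "a < b"
    and small: "\<And>l. l \<in> {1..n} \<Longrightarrow> l \<noteq> b \<Longrightarrow> w l \<le> n - 1"
    and i: "1 \<le> i" "i \<le> a"
  shows "perm_flag n w \<notin> Kcomp n s i"
proof
  assume K: "perm_flag n w \<in> Kcomp n s i"
  define N where "N = n + s - 1"
  have w_N: "w ` {1..n} \<subseteq> {1..N}" using rng by (simp add: N_def)
  obtain U where U: "openin (flag_top n N) U" "perm_flag n w \<in> U"
    "\<And>y. y \<in> U \<Longrightarrow> \<exists>g\<in>frames n N. y = flag_of n g \<and> (\<forall>l\<in>{1..n}. \<forall>k\<in>{1..N}.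
        cmod (g l k - (if k = w l then 1 else 0)) < 1 / (4 * real n))"
    using perm_flag_neighbourhood[OF inj w_N, of "1 / (4 * real n)"] n2 by auto
  obtain y where y: "y \<in> schubert_cell n N (wi n s i)" "y \<in> DeltaY n s" "y \<in> U"
    using Kcomp_meets_openin[OF K] U(1,2) by (auto simp: N_def)
  then obtain g where g: "y = flag_of n g"
    and near: "\<And>l k. l \<in> {1..n} \<Longrightarrow> k \<in> {1..N}
      \<Longrightarrow> cmod (g l k - (if k = w l then 1 else 0)) < 1 / (4 * real n)"
    using U(3) by blast
  have i_n: "i \<le> n" using i a by auto
  have "g b \<in> y n" using g b by (auto simp: flag_of_le intro: cv.span_base)
  then have "xmap n (g b) \<in> y (i - 1)"
    using schubert_cell_wi_DeltaY_xmap[OF N_def n2 s i(1) i_n y(1,2)] by blast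
  moreover have "2 * n - 2 \<le> N" using s by (simp add: N_def)
  ultimately show False
    using xmap_near_perm_frame_notin_prefix[OF n2 _ inj w_N b a small i(2) near] g i_n
    by (simp add: flag_of_le)
qed

section \<open>Sufficiency: deforming the permutation frame\<close>

lemma perturbed_sum_coord:
  assumes r: "r \<le> d" and q0: "q0 \<in> {1..r}"
  shows "(\<Sum>q\<in>{1..r}. cscale (\<alpha> q) (ebas (u q) + cscale t (ebas (d + 1 - q)))) (d + 1 - q0)
    = (\<Sum>q\<in>{1..r}. if u q = d + 1 - q0 then \<alpha> q else 0) + t * \<alpha> q0"
proof -
  have "(\<Sum>q\<in>{1..r}. cscale (\<alpha> q) (ebas (u q) + cscale t (ebas (d + 1 - q)))) (d + 1 - q0)
      = (\<Sum>q\<in>{1..r}. (if u q = d + 1 - q0 then \<alpha> q else 0) + (if q = q0 then t * \<alpha> q0 else 0))"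
    unfolding sum_cvec_apply
  proof (rule sum.cong[OF refl])
    fix q assume q: "q \<in> {1..r}"
    then have "d + 1 - q = d + 1 - q0 \<longleftrightarrow> q = q0" using q0 r by auto
    then show "cscale (\<alpha> q) (ebas (u q) + cscale t (ebas (d + 1 - q))) (d + 1 - q0) =
        (if u q = d + 1 - q0 then \<alpha> q else 0) + (if q = q0 then t * \<alpha> q0 else 0)"
      by (auto simp: cscale_apply ebas_def algebra_simps)
  qed
  also have "\<dots> = (\<Sum>q\<in>{1..r}. if u q = d + 1 - q0 then \<alpha> q else 0) + t * \<alpha> q0"
    using q0 by (simp add: sum.distrib)
  finally show ?thesis .
qed

text \<open>If the combination lies in \<open>E\<^sub>d\<^sub>-\<^sub>r\<close>, its coordinate \<open>d + 1 - q\<^sub>0\<close> vanishes for a nonzero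
  coefficient \<open>\<alpha>\<^sub>q\<^sub>0\<close> of minimal modulus; this forces another coefficient to be
  \<open>-t \<alpha>\<^sub>q\<^sub>0 \<noteq> 0\<close>, of smaller modulus since \<open>|t| < 1\<close>.\<close>

lemma perturbed_coeffs_zero:
  fixes u :: "nat \<Rightarrow> nat" and t :: complex and \<alpha> :: "nat \<Rightarrow> complex"
  assumes inj: "inj_on u {1..d}" and t: "t \<noteq> 0" "cmod t < 1" and r: "r \<le> d"
    and v: "(\<Sum>q\<in>{1..r}. cscale (\<alpha> q) (ebas (u q) + cscale t (ebas (d + 1 - q)))) \<in> Ecoord (d - r)"
  shows "\<forall>q\<in>{1..r}. \<alpha> q = 0"
proof (rule ccontr)
  assume "\<not> (\<forall>q\<in>{1..r}. \<alpha> q = 0)"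
  then have nonzero: "{q \<in> {1..r}. \<alpha> q \<noteq> 0} \<noteq> {}" by auto
  define m where "m = Min ((\<lambda>q. cmod (\<alpha> q)) ` {q \<in> {1..r}. \<alpha> q \<noteq> 0})"
  have m_le: "\<And>q. q \<in> {1..r} \<Longrightarrow> \<alpha> q \<noteq> 0 \<Longrightarrow> m \<le> cmod (\<alpha> q)"
    unfolding m_def by (intro Min_le) auto
  have "m \<in> (\<lambda>q. cmod (\<alpha> q)) ` {q \<in> {1..r}. \<alpha> q \<noteq> 0}"
    unfolding m_def using nonzero by (intro Min_in) auto
  then obtain q0 where q0: "q0 \<in> {1..r}" "\<alpha> q0 \<noteq> 0" "cmod (\<alpha> q0) = m" by auto
  let ?p = "d + 1 - q0"
  have "?p \<notin> {1..d - r}" using q0 r by auto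
  then have coord: "(\<Sum>q\<in>{1..r}. if u q = ?p then \<alpha> q else 0) + t * \<alpha> q0 = 0"
    using v perturbed_sum_coord[OF r q0(1), of \<alpha> u t] by (simp add: Ecoord_iff)
  show False
  proof (cases "\<exists>q'\<in>{1..r}. u q' = ?p")
    case False
    then have "(\<Sum>q\<in>{1..r}. if u q = ?p then \<alpha> q else 0) = 0" by (intro sum.neutral) auto
    then show False using coord t q0 by simp
  next
    case True
    then obtain q' where q': "q' \<in> {1..r}" "u q' = ?p" by auto
    have "(\<Sum>q\<in>{1..r}. if u q = ?p then \<alpha> q else 0) = (\<Sum>q\<in>{1..r}. if q = q' then \<alpha> q' else 0)"
    proof (rule sum.cong[OF refl])
      fix q assume "q \<in> {1..r}"
      then have "u q = ?p \<longleftrightarrow> q = q'" using inj_onD[OF inj, of q q'] q' r by auto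
      then show "(if u q = ?p then \<alpha> q else 0) = (if q = q' then \<alpha> q' else 0)" by auto
    qed
    with coord q' have "\<alpha> q' = - t * \<alpha> q0" by (simp add: eq_neg_iff_add_eq_0)
    then have "\<alpha> q' \<noteq> 0" "cmod (\<alpha> q') = cmod t * m" using t q0 by (auto simp: norm_mult)
    then have "m \<le> cmod t * m" using m_le[OF q'(1)] by simp
    moreover have "m > 0" using q0 by auto
    ultimately show False using t by (simp add: mult_le_cancel_right1)
  qed
qed

text \<open>\<open>skip i r\<close> enumerates \<open>{1..n} - {i}\<close>; \<open>kcol w i b\<close> is a bijection of
  \<open>{1..n-1}\<close> onto itself (the coordinates \<open>w\<^sub>l\<close>, \<open>l \<noteq> b\<close>, with \<open>w\<^sub>i\<close> moved to slot \<open>b\<close>); the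
  vectors \<open>kvec\<close> span \<open>E\<^sub>n\<^sub>-\<^sub>1\<close> and fill all positions except \<open>i\<close> and \<open>b\<close>. Position \<open>b\<close> carries
  the curve \<open>hb\<close> (with \<open>hb 0 = e\<^sub>w\<^sub>b\<close> and nonzero \<open>N\<close>-coordinate for \<open>t > 0\<close>), position \<open>i\<close>
  the vector \<open>kvec (b - 1) + t hb\<close>, which is \<open>e\<^sub>w\<^sub>i\<close> at \<open>t = 0\<close>.\<close>

definition skip :: "nat \<Rightarrow> nat \<Rightarrow> nat" where
  "skip i r = (if r < i then r else r + 1)"

definition kcol :: "(nat \<Rightarrow> nat) \<Rightarrow> nat \<Rightarrow> nat \<Rightarrow> nat \<Rightarrow> nat" where
  "kcol w i b r = (if skip i r = b then w i else w (skip i r))"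

definition kvec :: "nat \<Rightarrow> (nat \<Rightarrow> nat) \<Rightarrow> nat \<Rightarrow> nat \<Rightarrow> real \<Rightarrow> nat \<Rightarrow> cvec" where
  "kvec n w i b t r = ebas (kcol w i b r) + cscale (of_real t) (ebas (n - r))"

definition deform_frame ::
  "nat \<Rightarrow> (nat \<Rightarrow> nat) \<Rightarrow> nat \<Rightarrow> nat \<Rightarrow> (real \<Rightarrow> cvec) \<Rightarrow> real \<Rightarrow> nat \<Rightarrow> cvec" where
  "deform_frame n w i b hb t l = (if l \<notin> {1..n} then 0 else if l = i then
     (if i = b then hb t else kvec n w i b t (b - 1) + cscale (of_real t) (hb t))
     else if l = b then hb t else kvec n w i b t (if l < i then l else l - 1))"

lemma skip_inj: "inj_on (skip i) A"
  by (auto simp: skip_def inj_on_def split: if_splits)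

lemma kvec_0: "kvec n w i b 0 r = ebas (kcol w i b r)"
  by (simp add: kvec_def)

locale perm_large_entry =
  fixes n s :: nat and w :: "nat \<Rightarrow> nat" and b :: nat
  assumes n2: "n \<ge> 2" and s: "s \<ge> n - 1"
    and inj: "inj_on w {1..n}" and rng: "w ` {1..n} \<subseteq> {1..n + s - 1}"
    and b: "b \<in> {1..n}" "w b \<ge> n"
    and small: "\<And>l. l \<in> {1..n} \<Longrightarrow> l \<noteq> b \<Longrightarrow> w l \<le> n - 1"
begin

abbreviation "N \<equiv> n + s - 1"

lemma N_ge: "N \<ge> 2 * n - 2" "N \<ge> n" using n2 s by auto

lemma w_range: "l \<in> {1..n} \<Longrightarrow> w l \<in> {1..N}" using rng by (auto simp: image_subset_iff)

end

locale deformation = perm_large_entry +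
  fixes i :: nat and hb :: "real \<Rightarrow> cvec"
  assumes i: "1 \<le> i" "i \<le> b"
    and hb_cont: "continuous_on UNIV hb" and hb0: "hb 0 = ebas (w b)"
    and hb_CN: "\<And>t. 0 < t \<Longrightarrow> t < 1 \<Longrightarrow> hb t \<in> CN (n + s - 1)"
    and hb_last: "\<And>t. 0 < t \<Longrightarrow> t < 1 \<Longrightarrow> hb t (n + s - 1) \<noteq> 0"
    and hb_xmap: "\<And>t. 0 < t \<Longrightarrow> t < 1 \<Longrightarrow> xmap n (hb t) \<in> cspan (kvec n w i b t ` {1..i - 1})"
begin

abbreviation "k t \<equiv> kvec n w i b t"
abbreviation "h t \<equiv> deform_frame n w i b hb t"

lemma i_mem: "i \<in> {1..n}" using i b by auto

lemma skip_mem: "r \<in> {1..n - 1} \<Longrightarrow> skip i r \<in> {1..n} \<and> skip i r \<noteq> i"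
  using i b by (auto simp: skip_def)

lemma kcol_range: "r \<in> {1..n - 1} \<Longrightarrow> kcol w i b r \<in> {1..n - 1}"
proof -
  assume r: "r \<in> {1..n - 1}"
  note p = skip_mem[OF r]
  show ?thesis
  proof (cases "skip i r = b")
    case True
    then have "i \<noteq> b" "i \<in> {1..n}" using p i b by auto
    then show ?thesis using True small[of i] w_range[of i] by (auto simp: kcol_def)
  next
    case False
    then show ?thesis using p small[of "skip i r"] w_range[of "skip i r"] by (auto simp: kcol_def)
  qed
qed

lemma kcol_inj: "inj_on (kcol w i b) {1..n - 1}"
proof (rule inj_onI)
  fix r1 r2 assume r: "r1 \<in> {1..n - 1}" "r2 \<in> {1..n - 1}" "kcol w i b r1 = kcol w i b r2"
  note p1 = skip_mem[OF r(1)] and p2 = skip_mem[OF r(2)]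
  have "skip i r1 = skip i r2"
  proof (cases "skip i r1 = b"; cases "skip i r2 = b")
    assume "skip i r1 = b" "skip i r2 = b" then show ?thesis by simp
  next
    assume "skip i r1 = b" "skip i r2 \<noteq> b"
    then have "w i = w (skip i r2)" using r by (simp add: kcol_def)
    then have "i = skip i r2" using inj_onD[OF inj _ i_mem] p2 by auto
    then show ?thesis using p2 by simp
  next
    assume "skip i r1 \<noteq> b" "skip i r2 = b"
    then have "w (skip i r1) = w i" using r by (simp add: kcol_def)
    then have "skip i r1 = i" using inj_onD[OF inj _ _ i_mem] p1 by auto
    then show ?thesis using p1 by simp
  next
    assume "skip i r1 \<noteq> b" "skip i r2 \<noteq> b"
    then have "w (skip i r1) = w (skip i r2)" using r by (simp add: kcol_def)
    then show ?thesis using inj_onD[OF inj] p1 p2 by auto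
  qed
  then show "r1 = r2" using inj_onD[OF skip_inj, of i r1 r2] r by blast
qed

lemma kvec_in_Ecoord: "r \<in> {1..n - 1} \<Longrightarrow> k t r \<in> Ecoord (n - 1)"
proof -
  assume r: "r \<in> {1..n - 1}"
  have "ebas (kcol w i b r) \<in> Ecoord (n - 1)" using kcol_range[OF r] by (auto simp: Ecoord_iff ebas_def)
  moreover have "ebas (n - r) \<in> Ecoord (n - 1)" using r by (auto simp: Ecoord_iff ebas_def)
  ultimately show ?thesis unfolding kvec_def
    using csubspace_Ecoord cv.subspace_add cv.subspace_scale by blast
qed

lemma kvec_coeffs_zero:
  assumes t: "0 < t" "t < 1" and r: "r \<le> n - 1"
    and v: "(\<Sum>q\<in>{1..r}. cscale (\<alpha> q) (k t q)) \<in> Ecoord (n - 1 - r)"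
  shows "\<forall>q\<in>{1..r}. \<alpha> q = 0"
proof (rule perturbed_coeffs_zero[OF kcol_inj _ _ r])
  show "complex_of_real t \<noteq> 0" "cmod (complex_of_real t) < 1" using t by auto
  have "n - 1 + 1 = n" using n2 by simp
  then show "(\<Sum>q\<in>{1..r}. cscale (\<alpha> q) (ebas (kcol w i b q) + cscale (complex_of_real t) (ebas (n - 1 + 1 - q))))
      \<in> Ecoord (n - 1 - r)" using v by (simp add: kvec_def)
qed

lemma kvec_span_Ecoord_zero:
  assumes t: "0 < t" "t < 1" and r: "r \<le> n - 1"
    and v: "v \<in> cspan (k t ` {1..r})" "v \<in> Ecoord (n - 1 - r)"
  shows "v = 0"
proof -
  obtain \<alpha> where a: "v = (\<Sum>q\<in>{1..r}. cscale (\<alpha> q) (k t q))" using in_cspan_image_imp_sum[OF _ v(1)] by auto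
  then have "\<forall>q\<in>{1..r}. \<alpha> q = 0" using kvec_coeffs_zero[OF t r] v(2) by simp
  then show ?thesis unfolding a by (simp add: cscale_zero)
qed

lemma kvec_independent:
  assumes t: "0 < t" "t < 1"
  shows "inj_on (k t) {1..n - 1} \<and> \<not> cdependent (k t ` {1..n - 1})"
proof (rule independent_image_if_scalars_zero)
  fix \<alpha> assume "(\<Sum>q\<in>{1..n - 1}. cscale (\<alpha> q) (k t q)) = 0"
  then have "(\<Sum>q\<in>{1..n - 1}. cscale (\<alpha> q) (k t q)) \<in> Ecoord (n - 1 - (n - 1))"
    using Ecoord_0 by simp
  then show "\<forall>q\<in>{1..n - 1}. \<alpha> q = 0" by (rule kvec_coeffs_zero[OF t order_refl])
qed simp

lemma cspan_kvec:
  assumes t: "0 < t" "t < 1"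
  shows "cspan (k t ` {1..n - 1}) = Ecoord (n - 1)"
proof (rule csubspace_eq_if_cdim_le[where N = "n - 1"])
  show "cspan (k t ` {1..n - 1}) \<subseteq> Ecoord (n - 1)"
    using kvec_in_Ecoord by (intro cv.span_minimal csubspace_Ecoord) auto
  show "Ecoord (n - 1) \<subseteq> CN (n - 1)" by (simp add: CN_eq_Ecoord)
  have "cdim (cspan (k t ` {1..n - 1})) = card (k t ` {1..n - 1})"
    using kvec_independent[OF t] cv.dim_span_eq_card_independent by blast
  also have "\<dots> = n - 1" using kvec_independent[OF t] by (simp add: card_image)
  finally show "cdim (Ecoord (n - 1)) \<le> cdim (cspan (k t ` {1..n - 1}))" by (simp add: cdim_Ecoord)
qed (auto simp: cv.subspace_span csubspace_Ecoord)

lemma frame_outside: "l \<notin> {1..n} \<Longrightarrow> h t l = 0"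
  by (simp add: deform_frame_def)

lemma frame_b: "h t b = hb t"
  using b by (cases "b = i") (simp_all add: deform_frame_def)

lemma frame_i: "i \<noteq> b \<Longrightarrow> h t i = k t (b - 1) + cscale (of_real t) (hb t)"
  using i_mem by (simp add: deform_frame_def)

lemma frame_cases [consumes 1, case_names at_b at_i other]:
  assumes "l \<in> {1..n}"
  obtains (at_b) "l = b" "h t l = hb t"
    | (at_i) "l = i" "i \<noteq> b" "h t l = k t (b - 1) + cscale (of_real t) (hb t)"
    | (other) "l \<noteq> i" "l \<noteq> b" "(if l < i then l else l - 1) \<in> {1..n - 1}"
        "skip i (if l < i then l else l - 1) = l" "h t l = k t (if l < i then l else l - 1)"
proof (cases "l = b")
  case True
  then show thesis using at_b frame_b by simp
next
  case False
  show thesis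
  proof (cases "l = i")
    case True
    then show thesis using at_i frame_i \<open>l \<noteq> b\<close> by simp
  next
    case False
    moreover have "(if l < i then l else l - 1) \<in> {1..n - 1}" "skip i (if l < i then l else l - 1) = l"
      using False assms i b by (auto simp: skip_def)
    ultimately show thesis using other \<open>l \<noteq> b\<close> assms by (simp add: deform_frame_def)
  qed
qed

lemma kcol_b: "i \<noteq> b \<Longrightarrow> kcol w i b (b - 1) = w i"
  using i by (auto simp: kcol_def skip_def)

lemma kvec_in_cspan_frame: "r \<in> {1..n - 1} \<Longrightarrow> k t r \<in> cspan (h t ` {1..n})"
proof -
  assume r: "r \<in> {1..n - 1}"
  have "skip i r \<in> {1..n}" using r i b by (auto simp: skip_def)
  then show ?thesis
  proof (cases rule: frame_cases[where t=t])
    case at_b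
    then have "r = b - 1" "i \<noteq> b" using r i by (auto simp: skip_def split: if_splits)
    then have "k t r = h t i - cscale (of_real t) (h t b)" by (simp add: frame_i frame_b)
    moreover have "h t i \<in> cspan (h t ` {1..n})" "h t b \<in> cspan (h t ` {1..n})"
      using i_mem b by (auto intro: cv.span_base)
    ultimately show ?thesis by (simp add: cv.span_diff cv.span_scale)
  next
    case at_i
    then show ?thesis using r by (auto simp: skip_def split: if_splits)
  next
    case other
    then have "h t (skip i r) = k t r" using r by (auto simp: skip_def)
    then show ?thesis using \<open>skip i r \<in> {1..n}\<close> by (metis cv.span_base imageI)
  qed
qed

lemma Ecoord_subset_CN: "Ecoord (n - 1) \<subseteq> CN N"
  using Ecoord_mono[of "n - 1" N] N_ge by (simp add: CN_eq_Ecoord)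

lemma Ecoord_last_zero: "v \<in> Ecoord (n - 1) \<Longrightarrow> v N = 0"
  using N_ge n2 by (intro Ecoord_zero) auto

lemma frame_in_CN:
  assumes t: "0 < t" "t < 1" and l: "l \<in> {1..n}"
  shows "h t l \<in> CN N"
  using l
proof (cases rule: frame_cases[where t=t])
  case at_b
  then show ?thesis using hb_CN[OF t] by simp
next
  case at_i
  then have "b - 1 \<in> {1..n - 1}" using i b by auto
  then have "k t (b - 1) \<in> CN N" using kvec_in_Ecoord Ecoord_subset_CN by blast
  then show ?thesis
    using at_i hb_CN[OF t] csubspace_CN cv.subspace_add cv.subspace_scale by metis
next
  case other
  then show ?thesis using kvec_in_Ecoord Ecoord_subset_CN by auto
qed

lemma frame_in_frames:
  assumes t: "0 < t" "t < 1"
  shows "h t \<in> frames n N"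
proof -
  have hb_notin: "hb t \<notin> cspan (k t ` {1..n - 1})"
    using cspan_kvec[OF t] Ecoord_last_zero hb_last[OF t] by auto
  let ?S = "insert (hb t) (k t ` {1..n - 1})"
  have indep: "\<not> cdependent ?S"
    using cv.independent_insertI[OF hb_notin] kvec_independent[OF t] by auto
  have "hb t \<notin> k t ` {1..n - 1}" using hb_notin by (metis cv.span_base)
  then have card: "card ?S = n" using kvec_independent[OF t] n2 by (simp add: card_image)
  have "hb t \<in> cspan (h t ` {1..n})" using b frame_b[of t] by (metis cv.span_base imageI)
  then have "?S \<subseteq> cspan (h t ` {1..n})" using kvec_in_cspan_frame by auto
  then have "\<not> cdependent (h t ` {1..n}) \<and> card (h t ` {1..n}) = n"
    using indep card by (intro spanning_set_independent) (auto intro: card_image_le[THEN order_trans])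
  then show ?thesis
    unfolding frames_def using frame_outside frame_in_CN[OF t] by (auto intro: eq_card_imp_inj_on)
qed

lemma frame_image_below_i: "j < i \<Longrightarrow> h t ` {1..j} = k t ` {1..j}"
proof (rule image_cong[OF refl])
  fix l assume "j < i" "l \<in> {1..j}"
  then have l: "l \<in> {1..n}" "l \<noteq> i" "l \<noteq> b" "l < i" using i b by auto
  then show "h t l = k t l" by (simp add: deform_frame_def)
qed

text \<open>Modulo \<open>kvec 1,\<dots>,kvec (j - 1)\<close>, the first \<open>j \<ge> i\<close> frame vectors are multiples of
  \<open>pivot t j\<close>, whose \<open>N\<close>-coordinate is nonzero.\<close>

definition pivot :: "real \<Rightarrow> nat \<Rightarrow> cvec" where
  "pivot t j = (if j < b then h t i else hb t)"

lemma frame_image_subset: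
  assumes j: "i \<le> j" "j \<le> n"
  shows "h t ` {1..j} \<subseteq> cspan (insert (pivot t j) (k t ` {1..j - 1}))"
proof
  let ?S = "insert (pivot t j) (k t ` {1..j - 1})"
  fix x assume "x \<in> h t ` {1..j}"
  then obtain l where l: "l \<in> {1..j}" "x = h t l" by auto
  have "l \<in> {1..n}" using l j by auto
  then show "x \<in> cspan ?S"
  proof (cases rule: frame_cases[where t=t])
    case at_b
    then show ?thesis using l by (simp add: pivot_def cv.span_base)
  next
    case at_i
    show ?thesis
    proof (cases "j < b")
      case True
      then show ?thesis using l at_i by (simp add: pivot_def cv.span_base)
    next
      case False
      then have "b - 1 \<in> {1..j - 1}" "pivot t j = hb t" using at_i i by (auto simp: pivot_def)
      then have "k t (b - 1) \<in> cspan ?S" "hb t \<in> cspan ?S" by (auto intro: cv.span_base)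
      then show ?thesis using l at_i by (simp add: cv.span_add cv.span_scale)
    qed
  next
    case other
    then have "(if l < i then l else l - 1) \<in> {1..j - 1}" using l j i by auto
    then show ?thesis using l other by (auto intro: cv.span_base)
  qed
qed

lemma pivot_last:
  assumes t: "0 < t" "t < 1" and j: "i \<le> j"
  shows "pivot t j N \<noteq> 0"
proof (cases "j < b")
  case True
  then have "i \<noteq> b" "b - 1 \<in> {1..n - 1}" using j i b by auto
  then have "h t i N = of_real t * hb t N"
    using frame_i kvec_in_Ecoord[of "b - 1" t] Ecoord_last_zero by (simp add: cscale_apply)
  then show ?thesis using True t hb_last[OF t] by (simp add: pivot_def)
next
  case False
  then show ?thesis using hb_last[OF t] by (simp add: pivot_def)
qed

lemma cspan_kvec_subset: "cspan (k t ` {1..r}) \<subseteq> Ecoord (n - 1)" if "r \<le> n - 1"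
  using kvec_in_Ecoord that by (intro cv.span_minimal csubspace_Ecoord) auto

lemma frame_span_last_zero:
  assumes t: "0 < t" "t < 1" and j: "i \<le> j" "j \<le> n"
    and v: "v \<in> cspan (h t ` {1..j})" "v N = 0"
  shows "v \<in> cspan (k t ` {1..j - 1})"
proof -
  have "cspan (h t ` {1..j}) \<subseteq> cspan (insert (pivot t j) (k t ` {1..j - 1}))"
    using frame_image_subset[OF j] cv.span_minimal cv.subspace_span by blast
  then obtain c where c: "v - cscale c (pivot t j) \<in> cspan (k t ` {1..j - 1})"
    using v(1) cv.span_breakdown_eq by blast
  moreover have "cspan (k t ` {1..j - 1}) \<subseteq> Ecoord (n - 1)" using j by (intro cspan_kvec_subset) auto
  ultimately have "(v - cscale c (pivot t j)) N = 0" using Ecoord_last_zero by blast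
  then have "c = 0" using v(2) pivot_last[OF t j(1)] by (simp add: cscale_apply)
  then show ?thesis using c by simp
qed

lemma kvec_span_jump:
  assumes t: "0 < t" "t < 1" and r: "r \<le> n - 1"
    and v: "v \<in> cspan (k t ` {1..r})" "v \<in> Ecoord m" "v m \<noteq> 0"
  shows "n - r \<le> m" "m \<le> n - 1"
proof -
  have "m \<in> {1..n - 1}"
    using v cspan_kvec_subset[OF r] Ecoord_zero[of v "n - 1" m] by blast
  then show "m \<le> n - 1" by simp
  show "n - r \<le> m"
  proof (rule ccontr)
    assume "\<not> n - r \<le> m"
    then have "Ecoord m \<subseteq> Ecoord (n - 1 - r)" by (intro Ecoord_mono) linarith
    then have "v \<in> Ecoord (n - 1 - r)" using v(2) by blast
    then show False using kvec_span_Ecoord_zero[OF t r v(1)] v(3) by simp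
  qed
qed

lemma frame_jumps:
  assumes t: "0 < t" "t < 1" and j: "j \<le> n" and jump: "is_jump (flag_of n (h t) j) m"
  shows "m \<in> wi n s i ` {1..j}"
proof -
  obtain v where v: "v \<in> cspan (h t ` {1..j})" "v \<in> Ecoord m" "v m \<noteq> 0"
    using jump j by (auto simp: is_jump_def flag_of_le)
  have "v \<in> CN N" using v(1) frame_in_CN[OF t] j by (intro subsetD[OF cspan_subset_CN]) auto
  then have "m \<in> {1..N}" using v(3) by (auto simp: CN_def)
  consider (below) "j < i" | (top) "i \<le> j" "m = N" | (above) "i \<le> j" "m \<noteq> N" by linarith
  then show ?thesis
  proof cases
    case below
    then have span: "v \<in> cspan (k t ` {1..j})" and "j \<le> n - 1"
      using v(1) frame_image_below_i i b by auto
    then have "n - j \<le> m" "m \<le> n - 1" using kvec_span_jump[OF t _ span v(2,3)] by auto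
    then have "n - m \<in> {1..j}" "wi n s i (n - m) = m" using below \<open>m \<in> {1..N}\<close> by (auto simp: wi_def)
    then show ?thesis by (metis image_eqI)
  next
    case top
    then show ?thesis using i by (force simp: wi_def)
  next
    case above
    then have "v N = 0" using Ecoord_zero[OF v(2)] \<open>m \<in> {1..N}\<close> by auto
    then have span: "v \<in> cspan (k t ` {1..j - 1})" by (rule frame_span_last_zero[OF t above(1) j v(1)])
    have "j - 1 \<le> n - 1" using j by auto
    then have "n - (j - 1) \<le> m" "m \<le> n - 1" using kvec_span_jump[OF t _ span v(2,3)] by auto
    show ?thesis
    proof (cases "n - m < i")
      case True
      moreover have "n - m \<in> {1..j}" using above \<open>n - (j - 1) \<le> m\<close> \<open>m \<le> n - 1\<close> n2 by auto
      ultimately have "n - m \<in> {1..j}" "wi n s i (n - m) = m" using \<open>m \<le> n - 1\<close> by (simp_all add: wi_def)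
      then show ?thesis by (metis image_eqI)
    next
      case False
      then have l: "n + 1 - m \<in> {1..j}" "i < n + 1 - m"
        using above \<open>n - (j - 1) \<le> m\<close> \<open>m \<le> n - 1\<close> i by auto
      then have "wi n s i (n + 1 - m) = m" using \<open>m \<le> n - 1\<close> by (simp add: wi_def)
      then show ?thesis using l(1) by (metis image_eqI)
    qed
  qed
qed

lemma flag_frame_in_cell:
  assumes t: "0 < t" "t < 1"
  shows "flag_of n (h t) \<in> schubert_cell n N (wi n s i)"
  using wi_inj_on_range[OF n2 s i(1)] i_mem frame_jumps[OF t]
  by (intro schubert_cell_if_jumps[OF flag_of_in_Fl[OF frame_in_frames[OF t]]]) auto

lemma xmap_frame_in_cspan:
  assumes t: "0 < t" "t < 1" and j: "j \<le> n" and l: "l \<in> {1..j}"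
  shows "xmap n (h t l) \<in> cspan (h t ` {1..j})"
proof -
  have hb_xmap_j: "xmap n (hb t) \<in> cspan (h t ` {1..j})" if "i \<le> j"
  proof -
    have "xmap n (hb t) \<in> cspan (h t ` {1..i - 1})"
      using hb_xmap[OF t] frame_image_below_i[of "i - 1" t] i by simp
    moreover have "cspan (h t ` {1..i - 1}) \<subseteq> cspan (h t ` {1..j})"
      using that by (intro cv.span_mono) auto
    ultimately show ?thesis by auto
  qed
  have "l \<in> {1..n}" using l j by auto
  then show ?thesis
  proof (cases rule: frame_cases[where t=t])
    case at_b
    then show ?thesis using l i hb_xmap_j by simp
  next
    case at_i
    then have "b - 1 \<in> {1..n - 1}" using i b by auto
    then have "xmap n (k t (b - 1)) = 0" using kvec_in_Ecoord xmap_Ecoord_zero by blast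
    then show ?thesis using at_i l hb_xmap_j by (simp add: xmap_add xmap_scale cv.span_scale)
  next
    case other
    then show ?thesis using kvec_in_Ecoord xmap_Ecoord_zero by (simp add: cv.span_zero)
  qed
qed

lemma flag_frame_in_DeltaY:
  assumes t: "0 < t" "t < 1"
  shows "flag_of n (h t) \<in> DeltaY n s"
  unfolding DeltaY_def
proof (intro CollectI conjI allI impI)
  show "flag_of n (h t) \<in> Fl n N" by (rule flag_of_in_Fl[OF frame_in_frames[OF t]])
  have "xmap n ` CN N \<subseteq> Ecoord (n - 1)" using xmap_in_Ecoord by auto
  also have "\<dots> = cspan (k t ` {1..n - 1})" using cspan_kvec[OF t] by simp
  also have "\<dots> \<subseteq> cspan (h t ` {1..n})"
    using kvec_in_cspan_frame by (intro cv.span_minimal cv.subspace_span) auto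
  finally show "xmap n ` CN N \<subseteq> flag_of n (h t) n" by (simp add: flag_of_le)
next
  fix j assume j: "j \<le> n"
  have "xmap n ` cspan (h t ` {1..j}) \<subseteq> cspan (h t ` {1..j})"
    using xmap_frame_in_cspan[OF t j] by (intro xmap_cspan_subset cv.subspace_span) auto
  then show "xmap n ` flag_of n (h t) j \<subseteq> flag_of n (h t) j" using j by (simp add: flag_of_le)
qed

lemma continuous_frame: "continuous_on UNIV (\<lambda>t. h t)"
proof (intro continuous_on_coordinatewise_then_product)
  fix l q
  have "continuous_on UNIV (\<lambda>t. hb t q)"
    by (rule continuous_on_product_then_coordinatewise[OF hb_cont])
  then show "continuous_on UNIV (\<lambda>t. h t l q)"
    unfolding deform_frame_def kvec_def
    by (cases "l \<in> {1..n}"; cases "l = i"; cases "i = b"; cases "l = b")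
      (simp_all add: cscale_apply continuous_intros)
qed

lemma frame_0: "h 0 = perm_frame n w"
proof
  fix l
  show "h 0 l = perm_frame n w l"
  proof (cases "l \<in> {1..n}")
    case False
    have "perm_frame n w l = 0" unfolding perm_frame_def if_not_P[OF False] ..
    then show ?thesis using frame_outside[OF False] by simp
  next
    case True
    then show ?thesis
    proof (cases rule: frame_cases[where t=0])
      case at_b
      then show ?thesis using hb0 b by (simp add: perm_frame_def)
    next
      case at_i
      then show ?thesis using i_mem kcol_b[OF at_i(2)] by (simp add: perm_frame_def kvec_0)
    next
      case other
      then show ?thesis using True by (simp add: perm_frame_def kvec_0 kcol_def)
    qed
  qed
qed

lemma perm_flag_in_Kcomp:
  assumes VY: "perm_flag n w \<in> DeltaY n s"
  shows "perm_flag n w \<in> Kcomp n s i"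
proof -
  have "flag_of n (h 0) \<in> Kcomp n s i"
  proof (rule in_Kcomp_if_curve[OF continuous_frame])
    show "h 0 \<in> frames n N" unfolding frame_0 by (rule perm_frame_in_frames[OF inj rng])
    show "flag_of n (h 0) \<in> DeltaY n s" unfolding frame_0 flag_of_perm_frame by (rule VY)
    show "\<And>t. 0 < t \<Longrightarrow> t < 1 \<Longrightarrow> h t \<in> frames n N \<and>
        flag_of n (h t) \<in> schubert_cell n N (wi n s i) \<inter> DeltaY n s"
      using frame_in_frames flag_frame_in_cell flag_frame_in_DeltaY by blast
  qed
  then show ?thesis unfolding frame_0 flag_of_perm_frame .
qed

end

lemma kcol_below: "r < i \<Longrightarrow> i \<le> b \<Longrightarrow> kcol w i b r = w r"
  by (simp add: kcol_def skip_def)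

text \<open>A preimage under \<open>x\<close> of \<open>kvec a + t kvec 1 \<in> span(kvec 1,\<dots>,kvec (i - 1))\<close>, plus \<open>t e\<^sub>N\<close>.
  If \<open>N = 2n - 2\<close> the two parts overlap, and the summand \<open>t kvec 1\<close> keeps the \<open>N\<close>-coordinate
  nonzero.\<close>

definition bvec_partner :: "nat \<Rightarrow> nat \<Rightarrow> (nat \<Rightarrow> nat) \<Rightarrow> nat \<Rightarrow> nat \<Rightarrow> nat \<Rightarrow> real \<Rightarrow> cvec" where
  "bvec_partner n s w i b a t = (\<lambda>m. if n \<le> m \<and> m \<le> 2 * n - 2
      then (kvec n w i b t a + cscale (of_real t) (kvec n w i b t 1)) (m - (n - 1))
      else if m = n + s - 1 then of_real t else 0)"

definition bvec_free :: "nat \<Rightarrow> nat \<Rightarrow> real \<Rightarrow> cvec" where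
  "bvec_free c N t = ebas c + cscale (of_real t) (ebas N)"

context perm_large_entry
begin

lemma kvec_below_vanish:
  assumes "r \<in> {1..i - 1}" "i \<le> b" "q \<notin> {1..n - 1}"
  shows "kvec n w i b t r q = 0"
proof -
  have "w r \<in> {1..n - 1}" using assms small[of r] w_range[of r] b by auto
  moreover have "kcol w i b r = w r" using assms by (intro kcol_below) auto
  ultimately show ?thesis using assms b by (auto simp: kvec_def ebas_def cscale_apply)
qed

lemma xmap_bvec_partner:
  assumes a: "a \<in> {1..n}" "a < i" and i: "i \<le> b"
  shows "xmap n (bvec_partner n s w i b a t) = kvec n w i b t a + cscale (of_real t) (kvec n w i b t 1)"
proof
  fix q
  show "xmap n (bvec_partner n s w i b a t) q = (kvec n w i b t a + cscale (of_real t) (kvec n w i b t 1)) q"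
  proof (cases "q \<in> {1..n - 1}")
    case True
    then have "n \<le> q + (n - 1) \<and> q + (n - 1) \<le> 2 * n - 2" "q + (n - 1) - (n - 1) = q" by auto
    then show ?thesis using True by (simp add: xmap_def bvec_partner_def)
  next
    case False
    moreover have "a \<in> {1..i - 1}" "1 \<in> {1..i - 1}" using a by auto
    ultimately show ?thesis
      using kvec_below_vanish[OF _ i False] by (auto simp: xmap_def cscale_apply)
  qed
qed

lemma bvec_partner_0:
  assumes a: "a \<in> {1..n}" "w a = w b - (n - 1)" "a < i" and i: "i \<le> b" and b_le: "w b \<le> 2 * n - 2"
  shows "bvec_partner n s w i b a 0 = ebas (w b)"
proof
  fix m
  have y0: "kvec n w i b 0 a = ebas (w a)" using kcol_below[of a i b w] a i by (simp add: kvec_0)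
  show "bvec_partner n s w i b a 0 m = ebas (w b) m"
  proof (cases "n \<le> m \<and> m \<le> 2 * n - 2")
    case True
    then have "m - (n - 1) = w a \<longleftrightarrow> m = w b" using a b by auto
    then show ?thesis using True y0 by (simp add: bvec_partner_def ebas_def)
  next
    case False
    then have "m \<noteq> w b" using b b_le by auto
    then show ?thesis unfolding bvec_partner_def if_not_P[OF False] by (simp add: ebas_def)
  qed
qed

lemma bvec_partner_last:
  assumes a: "a \<in> {1..n}" "a < i" and i: "i \<le> b" and t: "0 < t"
  shows "bvec_partner n s w i b a t N \<noteq> 0"
proof (cases "N \<le> 2 * n - 2")
  case False
  then show ?thesis using t by (simp add: bvec_partner_def)
next
  case True
  then have N: "N = 2 * n - 2" using N_ge by auto
  have c: "n \<le> 2 * n - 2 \<and> 2 * n - 2 \<le> 2 * n - 2" and e: "2 * n - 2 - (n - 1) = n - 1"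
    using n2 by auto
  have "bvec_partner n s w i b a t N = (kvec n w i b t a + cscale (of_real t) (kvec n w i b t 1)) (n - 1)"
    unfolding bvec_partner_def N if_P[OF c] e ..
  also have "\<dots> = of_real ((if w a = n - 1 then 1 else 0) + t * (if a = 1 then 1 else 0)
      + t * (if w 1 = n - 1 then 1 else 0) + t * t)"
  proof -
    have "kcol w i b a = w a" "kcol w i b 1 = w 1" using a i by (auto intro: kcol_below)
    moreover have "n - 1 = n - a \<longleftrightarrow> a = 1" using a(1) by auto
    ultimately show ?thesis using n2 by (simp add: kvec_def ebas_def cscale_apply algebra_simps)
  qed
  also have "\<dots> \<noteq> 0"
  proof -
    have "(if w a = n - 1 then 1 else 0) + t * (if a = 1 then 1 else 0)
        + t * (if w 1 = n - 1 then 1 else 0) + t * t > (0::real)"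
      using t by (auto intro!: add_nonneg_pos add_pos_nonneg)
    then show ?thesis by (simp only: of_real_eq_0_iff)
  qed
  finally show ?thesis .
qed

lemma deformation_bvec_partner:
  assumes b_le: "w b \<le> 2 * n - 2" and a: "a \<in> {1..n}" "w a = w b - (n - 1)" "a < i"
    and i: "i \<le> b"
  shows "deformation n s w b i (bvec_partner n s w i b a)"
proof (intro deformation.intro deformation_axioms.intro)
  show "perm_large_entry n s w b" by (rule perm_large_entry_axioms)
  show "1 \<le> i" "i \<le> b" using a i by auto
  show "continuous_on UNIV (bvec_partner n s w i b a)"
  proof (intro continuous_on_coordinatewise_then_product)
    fix m
    show "continuous_on UNIV (\<lambda>t. bvec_partner n s w i b a t m)"
      unfolding bvec_partner_def kvec_def
      by (cases "n \<le> m \<and> m \<le> 2 * n - 2"; cases "m = n + s - 1")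
        (auto simp: cscale_apply intro!: continuous_intros)
  qed
  show "bvec_partner n s w i b a 0 = ebas (w b)" by (rule bvec_partner_0[OF a i b_le])
  fix t :: real assume t: "0 < t" "t < 1"
  show "bvec_partner n s w i b a t \<in> CN N"
    using n2 s by (auto simp: CN_def bvec_partner_def)
  have "a \<in> {1..i - 1}" "1 \<in> {1..i - 1}" using a by auto
  then show "xmap n (bvec_partner n s w i b a t) \<in> cspan (kvec n w i b t ` {1..i - 1})"
    unfolding xmap_bvec_partner[OF a(1,3) i] by (intro cv.span_add cv.span_scale cv.span_base) auto
  show "bvec_partner n s w i b a t N \<noteq> 0" by (rule bvec_partner_last[OF a(1,3) i t(1)])
qed

lemma deformation_bvec_free:
  assumes b_ge: "w b \<ge> 2 * n - 1" and i: "1 \<le> i" "i \<le> b"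
  shows "deformation n s w b i (bvec_free (w b) N)"
proof (intro deformation.intro deformation_axioms.intro)
  show "perm_large_entry n s w b" by (rule perm_large_entry_axioms)
  show "1 \<le> i" "i \<le> b" by (rule i)+
  show "continuous_on UNIV (bvec_free (w b) N)"
  proof (intro continuous_on_coordinatewise_then_product)
    fix m show "continuous_on UNIV (\<lambda>t. bvec_free (w b) N t m)"
      unfolding bvec_free_def by (auto simp: cscale_apply intro!: continuous_intros)
  qed
  show "bvec_free (w b) N 0 = ebas (w b)" by (simp add: bvec_free_def)
  fix t :: real assume t: "0 < t" "t < 1"
  have w_b: "w b \<in> {1..N}" by (rule w_range[OF b(1)])
  then show "bvec_free (w b) N t \<in> CN N"
    using n2 by (auto simp: CN_def bvec_free_def ebas_def cscale_apply)
  have "xmap n (bvec_free (w b) N t) = 0"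
    using b_ge w_b by (auto simp: xmap_def bvec_free_def ebas_def cscale_apply fun_eq_iff)
  then show "xmap n (bvec_free (w b) N t) \<in> cspan (kvec n w i b t ` {1..i - 1})"
    by (simp add: cv.span_zero)
  have "bvec_free (w b) N t N = of_real ((if w b = N then 1 else 0) + t)"
    by (simp add: bvec_free_def ebas_def cscale_apply)
  moreover have "(if w b = N then 1 else 0) + t > 0" using t by auto
  ultimately show "bvec_free (w b) N t N \<noteq> 0" by (metis less_irrefl of_real_eq_0_iff)
qed

lemma perm_flag_notin_Kcomp_after_large:
  assumes VY: "perm_flag n w \<in> DeltaY n s" and i: "b < i" "i \<le> n"
  shows "perm_flag n w \<notin> Kcomp n s i"
proof (rule notin_Kcomp_if_prefix_not_low[OF n2 s _ i(2) DeltaY_D(1)[OF VY]])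
  have "ebas (w b) \<in> perm_flag n w (i - 1)"
    using b i by (auto simp: perm_flag_def intro!: cv.span_base)
  moreover have "ebas (w b) \<notin> Ecoord (n - 1)"
  proof
    assume "ebas (w b) \<in> Ecoord (n - 1)"
    then have "ebas (w b) (w b) = 0" using b by (intro Ecoord_zero) auto
    then show False by (simp add: ebas_def)
  qed
  ultimately show "\<not> perm_flag n w (i - 1) \<subseteq> Ecoord (n - 1)" by blast
qed (use i in auto)

lemma perm_flag_Kcomp_iff_partner:
  assumes VY: "perm_flag n w \<in> DeltaY n s" and b_le: "w b \<le> 2 * n - 2"
    and a: "a \<in> {1..n}" "w a = w b - (n - 1)" and i: "1 \<le> i" "i \<le> n"
  shows "perm_flag n w \<in> Kcomp n s i \<longleftrightarrow> a < i \<and> i \<le> b"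
proof -
  have "a < b" by (rule perm_flag_DeltaY_partner(2)[OF n2 s inj VY b b_le a])
  consider (up_to_a) "i \<le> a" | (between) "a < i" "i \<le> b" | (after_b) "b < i" by linarith
  then show ?thesis
  proof cases
    case up_to_a
    then show ?thesis
      using perm_flag_notin_Kcomp_if_le_partner[OF n2 s inj rng b b_le a \<open>a < b\<close> small i(1)] by simp
  next
    case between
    then interpret deformation n s w b i "bvec_partner n s w i b a"
      using deformation_bvec_partner[OF b_le a] by simp
    show ?thesis using perm_flag_in_Kcomp[OF VY] between by simp
  next
    case after_b
    then show ?thesis using perm_flag_notin_Kcomp_after_large[OF VY after_b i(2)] by simp
  qed
qed

lemma perm_flag_Kcomp_iff_free:
  assumes VY: "perm_flag n w \<in> DeltaY n s" and b_ge: "w b \<ge> 2 * n - 1" and i: "1 \<le> i" "i \<le> n"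
  shows "perm_flag n w \<in> Kcomp n s i \<longleftrightarrow> i \<le> b"
proof (cases "i \<le> b")
  case True
  then interpret deformation n s w b i "bvec_free (w b) N"
    using deformation_bvec_free[OF b_ge i(1)] by simp
  show ?thesis using perm_flag_in_Kcomp[OF VY] True by simp
next
  case False
  then show ?thesis using perm_flag_notin_Kcomp_after_large[OF VY _ i(2)] by simp
qed

end

theorem corollary3p8:
  fixes n s :: nat and w :: "nat \<Rightarrow> nat"
  assumes "n \<ge> 2" and "s \<ge> n - 1"
    and "inj_on w {1..n}" and "w ` {1..n} \<subseteq> {1..n + s - 1}"
    and "perm_flag n w \<in> DeltaY n s"
  shows "(\<exists>!b. b \<in> {1..n} \<and> w b \<ge> n)
    \<and> (\<forall>b\<in>{1..n}. w b \<ge> n \<longrightarrow>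
         w ` ({1..n} - {b}) = {1..n - 1}
       \<and> (w b \<le> 2 * n - 2 \<longrightarrow>
            (\<exists>a\<in>{1..n}. w a = w b - (n - 1))
          \<and> (\<forall>a\<in>{1..n}. w a = w b - (n - 1) \<longrightarrow> a < b
               \<and> (\<forall>i. admissible n s i \<longrightarrow>
                     (perm_flag n w \<in> Kcomp n s i \<longleftrightarrow> a < i \<and> i \<le> b))))
       \<and> (w b \<ge> 2 * n - 1 \<longrightarrow>
            (\<forall>i. admissible n s i \<longrightarrow> (perm_flag n w \<in> Kcomp n s i \<longleftrightarrow> i \<le> b))))"
proof (intro conjI ballI impI allI)
  show "\<exists>!b. b \<in> {1..n} \<and> w b \<ge> n" by (rule perm_flag_DeltaY_large_unique[OF assms])
  fix b assume b: "b \<in> {1..n}" "w b \<ge> n"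
  show "w ` ({1..n} - {b}) = {1..n - 1}" by (rule perm_flag_DeltaY_image_small[OF assms b])
  then interpret perm_large_entry n s w b
    using assms b by unfold_locales (auto simp: image_subset_iff)
  have i: "1 \<le> i" "i \<le> n" if "admissible n s i" for i
    using that by (auto simp: admissible_def split: if_splits)
  {
    assume b_le: "w b \<le> 2 * n - 2"
    show "\<exists>a\<in>{1..n}. w a = w b - (n - 1)"
      by (rule perm_flag_DeltaY_partner(1)[OF n2 s inj assms(5) b b_le])
    fix a assume a: "a \<in> {1..n}" "w a = w b - (n - 1)"
    show "a < b" by (rule perm_flag_DeltaY_partner(2)[OF n2 s inj assms(5) b b_le a])
    fix i assume "admissible n s i"
    then show "perm_flag n w \<in> Kcomp n s i \<longleftrightarrow> a < i \<and> i \<le> b"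
      using perm_flag_Kcomp_iff_partner[OF assms(5) b_le a] i by blast
  }
  fix i assume "w b \<ge> 2 * n - 1" "admissible n s i"
  then show "perm_flag n w \<in> Kcomp n s i \<longleftrightarrow> i \<le> b"
    using perm_flag_Kcomp_iff_free[OF assms(5)] i by blast
qed

end
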